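(* Assume the standing assumptions of the context, that the eigenvalues $a_k^f$ are strictly increasing in $k$, and that $a_2^f\le2a_1^f$. Let $T^*=-\frac1{2a_2^f}\ln\big(1-\frac{a_2^f}{2a_1^f}\big)$. If $T>T^*$, then any minimizer $(y^*,\tau)$ of $I$ over $\mathcal T$ satisfies $\|y^*(t)\|_{\mathcal H}<L$ for all $t<T$ and $\|y^*(T)\|_{\mathcal H}=L$; moreover $\tau=T$ is the first exit time of $y^*$ from $\mathring B_{\mathcal H}(0,L)$ and the exit is in the direction of $e_2^f$, i.e. $\langle y^*(T),e_k^f\rangle_{\mathcal H}=0$ for all $k\ne2$.
   Context: $\ell>0$, $\mathcal H=L^2(0,\ell)$; $A$ is the realization in $\mathcal H$ of a uniformly elliptic operator $\mathcal A\phi=(a\phi')'$ ($a\in C^1$, $\inf a>0$) with Dirichlet, Neumann/Robin or periodic boundary conditions, $-A$ self-adjoint with nonnegative spectrum; $f\in C^2(\mathbb R)$ with polynomial growth, $F(x)(\xi)=f(x(\xi))$, $DF(x)$ = multiplication by $f'(x(\cdot))$; $x^*$ is a stable equilibrium ($Ax^*+F(x^* )=0$) and $-A-DF(x^* )$ is self-adjoint with nonnegative eigenvalues $a^f_1\le a_2^f\le\dots$ and complete orthonormal eigenvectors $e_k^f$. $L>0$. Let $u(t,\eta)=2a_1^f\langle\eta,e_1^f\rangle_{\mathcal H}e_1^f$. $\mathcal T$ is the set of pairs $(y,\tau)$ with $y\in C([0,T];\mathcal H)$, $y(0)=0$, $\tau\in(0,T]$, $\|y(\tau)\|_{\mathcal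 H}=L$ and $\|y(t)\|_{\mathcal H}\le L$ for $t\in[0,\tau)$. $\mathcal C_{y}=\{v\in L^2([0,T];\mathcal H):\dot y=Ay+DF(x^* )y-u(t,y)+v\text{ on }[0,T]\}$ and $I(y,\tau)=\inf_{v\in\mathcal C_y}\int_0^\tau\big(\frac12\|v(t)\|^2_{\mathcal H}-\|u(t,y(t))\|^2_{\mathcal H}\big)dt$. *)

theory Defs
  imports "HOL-Analysis.Analysis" "HOL-Probability.Probability"
begin

text \<open>H is a separable real Hilbert space 'h;
  e k (k \<ge> 1) is the complete orthonormal system of eigenvectors of
  -A-DF(x*) with eigenvalues a k (k \<ge> 1).  Index 0 is unused.\<close>

text \<open>Feedback u(t,eta) = 2 a_1 <eta,e_1> e_1 (independent of t).\<close>
definition ctrl :: "(nat \<Rightarrow> 'h::real_inner) \<Rightarrow> (nat \<Rightarrow> real) \<Rightarrow> 'h \<Rightarrow> 'h" where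
  "ctrl e a \<eta> = (2 * a 1 * inner \<eta> (e 1)) *\<^sub>R e 1"

definition L2_on :: "real \<Rightarrow> (real \<Rightarrow> 'h::real_normed_vector) \<Rightarrow> bool" where
  "L2_on T v \<longleftrightarrow> set_borel_measurable lborel {0..T} v \<and>
      set_integrable lborel {0..T} (\<lambda>t. (norm (v t))\<^sup>2)"

text \<open>Weak formulation of  y' = Ay + DF(x*)y - u(t,y) + v  on [0,T], tested
  against the eigenvectors e k of the self-adjoint operator -A-DF(x*):
  <A y + DF(x*) y, e_k> = -a_k <y, e_k>.\<close>
definition weak_sol :: "(nat \<Rightarrow> 'h::real_inner) \<Rightarrow> (nat \<Rightarrow> real) \<Rightarrow> real
    \<Rightarrow> (real \<Rightarrow> 'h) \<Rightarrow> (real \<Rightarrow> 'h) \<Rightarrow> bool" where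
  "weak_sol e a T y v \<longleftrightarrow>
     (\<forall>k\<ge>1. \<forall>t\<in>{0..T}.
        inner (y t) (e k) - inner (y 0) (e k) =
        (LINT s:{0..t}|lborel. - a k * inner (y s) (e k)
                                - inner (ctrl e a (y s)) (e k) + inner (v s) (e k)))"

definition Cset :: "(nat \<Rightarrow> 'h::real_inner) \<Rightarrow> (nat \<Rightarrow> real) \<Rightarrow> real
    \<Rightarrow> (real \<Rightarrow> 'h) \<Rightarrow> (real \<Rightarrow> 'h) set" where
  "Cset e a T y = {v. L2_on T v \<and> weak_sol e a T y v}"

definition Tset :: "real \<Rightarrow> real \<Rightarrow> ((real \<Rightarrow> 'h::real_normed_vector) \<times> real) set" where
  "Tset T L = {(y, \<tau>). continuous_on {0..T} y \<and> y 0 = 0 \<and> 0 < \<tau> \<and> \<tau> \<le> T \<and>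
                 norm (y \<tau>) = L \<and> (\<forall>t\<in>{0..<\<tau>}. norm (y t) \<le> L)}"

text \<open>The functional I (infimum over the empty set is +infinity).\<close>
definition Ifun :: "(nat \<Rightarrow> 'h::real_inner) \<Rightarrow> (nat \<Rightarrow> real) \<Rightarrow> real
    \<Rightarrow> (real \<Rightarrow> 'h) \<Rightarrow> real \<Rightarrow> ereal" where
  "Ifun e a T y \<tau> = (INF v \<in> Cset e a T y.
      ereal (LINT t:{0..\<tau>}|lborel. (1/2) * (norm (v t))\<^sup>2 - (norm (ctrl e a (y t)))\<^sup>2))"

definition Tstar :: "real \<Rightarrow> real \<Rightarrow> ereal" where
  "Tstar a1 a2 = (if a2 < 2 * a1 then ereal (- (1 / (2 * a2)) * ln (1 - a2 / (2 * a1))) else \<infinity>)"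

end

theory Submission
  imports Defs
begin

(*
  In the eigenbasis e_k the controlled equation decouples into the scalar equations
  y_k' = -b_k y_k + v_k with b_1 = 3 a_1 (the feedback only acts on the first mode) and
  b_k = a_k for k >= 2.  For k >= 2 the least energy int_0^sigma v_k^2 steering y_k from 0 to
  eta in time sigma is steering_cost a_k sigma * eta^2, attained by a multiple of exp (a_k t)
  whose trajectory is eta sinh (a_k t) / sinh (a_k sigma); a control exceeding this minimum by
  R keeps y_k within sqrt (R / (2 a_k)) of that trajectory.  For k = 1 the cost equals
  2 a_1 y_1(sigma)^2 plus a nonnegative excess which bounds y_1 uniformly.  By Bessel's
  inequality, reaching the sphere of radius L at time sigma therefore costs at least
  1/2 (min_k mode_cost) L^2, while the path along e_2 costs 1/2 steering_cost a_2 T L^2.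
  The coefficient steering_cost decreases in sigma and increases in a_k, and T > T* says
  precisely that steering_cost a_2 T < 4 a_1.  Hence an earlier exit, or a component of the
  exit point off e_2, costs strictly more than a minimizer, and the excess of a near-optimal
  control forces y to follow the e_2 profile, which stays strictly inside the ball before T.
*)

section \<open>Real analysis on intervals\<close>

lemma integrable_mult_bounded:
  fixes f g :: "'a \<Rightarrow> real"
  assumes "integrable M f" "g \<in> borel_measurable M" "\<And>x. \<bar>g x\<bar> \<le> B"
  shows "integrable M (\<lambda>x. g x * f x)"
proof (rule Bochner_Integration.integrable_bound[of _ "\<lambda>x. B * f x"])
  show "integrable M (\<lambda>x. B * f x)" using assms(1) by simp
  show "(\<lambda>x. g x * f x) \<in> borel_measurable M"
    using assms(1,2) by (simp add: borel_measurable_integrable borel_measurable_times)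
  have "0 \<le> B" using assms(3) by (meson abs_ge_zero order_trans)
  then show "AE x in M. norm (g x * f x) \<le> norm (B * f x)"
    using assms(3) by (simp add: abs_mult mult_right_mono)
qed

lemma set_integrable_continuous_mult:
  fixes f g :: "real \<Rightarrow> real"
  assumes f: "set_integrable lborel {a..b} f" and g: "continuous_on {a..b} g"
  shows "set_integrable lborel {a..b} (\<lambda>t. g t * f t)"
proof -
  obtain B where B: "\<And>t. t \<in> {a..b} \<Longrightarrow> \<bar>g t\<bar> \<le> B"
    using compact_imp_bounded[OF compact_continuous_image[OF g compact_Icc]]
    unfolding bounded_iff by (metis atLeastAtMost_iff imageI real_norm_def)
  have "integrable lborel (\<lambda>t. (indicator {a..b} t * g t) * (indicator {a..b} t * f t))"
  proof (rule integrable_mult_bounded)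
    show "integrable lborel (\<lambda>t. indicator {a..b} t * f t)"
      using f by (simp add: set_integrable_def)
    show "(\<lambda>t. indicator {a..b} t * g t) \<in> borel_measurable lborel"
      using borel_measurable_continuous_on_indicator[OF _ g] by simp
    show "\<bar>indicator {a..b} t * g t\<bar> \<le> max B 0" for t
      using B[of t] by (auto simp: indicator_def)
  qed
  also have "(\<lambda>t. (indicator {a..b} t * g t) * (indicator {a..b} t * f t))
      = (\<lambda>t. indicator {a..b} t *\<^sub>R (g t * f t))"
    by (auto simp: indicator_def fun_eq_iff)
  finally show ?thesis unfolding set_integrable_def .
qed

lemma set_integral_nonneg:
  fixes f :: "real \<Rightarrow> real"
  assumes "\<And>x. x \<in> A \<Longrightarrow> 0 \<le> f x"
  shows "0 \<le> (LINT x:A|lborel. f x)"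
  unfolding set_lebesgue_integral_def
  by (rule integral_nonneg_AE) (use assms in \<open>auto simp: indicator_def\<close>)

lemma set_integral_mono_set:
  fixes f :: "real \<Rightarrow> real"
  assumes "set_integrable lborel B f" "A \<subseteq> B" "A \<in> sets lborel" "\<And>x. x \<in> B \<Longrightarrow> 0 \<le> f x"
  shows "(LINT x:A|lborel. f x) \<le> (LINT x:B|lborel. f x)"
proof -
  have "set_integrable lborel A f" by (rule set_integrable_subset[OF assms(1,3,2)])
  then show ?thesis using assms unfolding set_lebesgue_integral_def set_integrable_def
    by (intro integral_mono) (auto simp: indicator_def subset_eq)
qed

lemma
  fixes f :: "'i \<Rightarrow> real \<Rightarrow> real"
  assumes "\<And>k. k \<in> K \<Longrightarrow> set_integrable lborel A (f k)"
  shows set_integrable_sum: "set_integrable lborel A (\<lambda>t. \<Sum>k\<in>K. f k t)"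
    and set_integral_sum: "(LINT t:A|lborel. (\<Sum>k\<in>K. f k t)) = (\<Sum>k\<in>K. LINT t:A|lborel. f k t)"
proof -
  have "(\<lambda>t. indicator A t *\<^sub>R (\<Sum>k\<in>K. f k t)) = (\<lambda>t. \<Sum>k\<in>K. indicator A t *\<^sub>R f k t)"
    by (simp add: sum_distrib_left)
  then show "set_integrable lborel A (\<lambda>t. \<Sum>k\<in>K. f k t)"
    and "(LINT t:A|lborel. (\<Sum>k\<in>K. f k t)) = (\<Sum>k\<in>K. LINT t:A|lborel. f k t)"
    using assms unfolding set_integrable_def set_lebesgue_integral_def by auto
qed

lemma set_integrable_Icc_of_sq:
  fixes f :: "real \<Rightarrow> real"
  assumes meas: "(\<lambda>t. indicator {a..b} t * f t) \<in> borel_measurable lborel"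
    and sq: "set_integrable lborel {a..b} (\<lambda>t. (f t)\<^sup>2)"
  shows "set_integrable lborel {a..b} f"
proof -
  have "set_integrable lborel {a..b} (\<lambda>t. 1 + (f t)\<^sup>2)"
    using sq borel_integrable_atLeastAtMost'[of a b "\<lambda>_. 1::real"] by simp
  then show ?thesis
    unfolding set_integrable_def
  proof (rule Bochner_Integration.integrable_bound)
    have "\<bar>f t\<bar> \<le> 1 + (f t)\<^sup>2" for t
      using zero_le_power2[of "\<bar>f t\<bar> - 1"]
      by (simp add: power2_eq_square algebra_simps abs_mult_self)
    then show "AE t in lborel.
        norm (indicator {a..b} t *\<^sub>R f t) \<le> norm (indicator {a..b} t *\<^sub>R (1 + (f t)\<^sup>2))"
      by (intro AE_I2) (auto simp: indicator_def)
  qed (use meas in simp)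
qed

lemma quadratic_nonneg_imp_discriminant_le:
  fixes a b c :: real
  assumes "\<And>l. 0 \<le> a - 2 * l * c + l\<^sup>2 * b" and "0 \<le> b"
  shows "c\<^sup>2 \<le> a * b"
proof (cases "b = 0")
  case True
  show ?thesis
  proof (cases "c = 0")
    case False
    have "0 \<le> a - 2 * ((a + 1) / (2 * c)) * c + ((a + 1) / (2 * c))\<^sup>2 * b" by (rule assms(1))
    then show ?thesis using False True by (simp add: field_simps)
  qed (use assms(1)[of 0] True in simp)
next
  case False
  then have "0 < b" using assms(2) by simp
  moreover have "0 \<le> a - 2 * (c / b) * c + (c / b)\<^sup>2 * b" by (rule assms(1))
  ultimately show ?thesis by (simp add: field_simps power2_eq_square)
qed

lemma set_integral_Cauchy_Schwarz:
  fixes f g :: "real \<Rightarrow> real"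
  assumes "set_integrable lborel A (\<lambda>t. (f t)\<^sup>2)" "set_integrable lborel A (\<lambda>t. (g t)\<^sup>2)"
    and "set_integrable lborel A (\<lambda>t. f t * g t)" and A: "A \<in> sets lborel"
  shows "(LINT t:A|lborel. f t * g t)\<^sup>2 \<le> (LINT t:A|lborel. (f t)\<^sup>2) * (LINT t:A|lborel. (g t)\<^sup>2)"
proof (rule quadratic_nonneg_imp_discriminant_le)
  fix l :: real
  have "(LINT t:A|lborel. (f t - l * g t)\<^sup>2)
      = (LINT t:A|lborel. (f t)\<^sup>2 - (2 * l) * (f t * g t) + l\<^sup>2 * (g t)\<^sup>2)"
    by (rule set_lebesgue_integral_cong) (use A in \<open>auto simp: power2_eq_square algebra_simps\<close>)
  also have "\<dots> = (LINT t:A|lborel. (f t)\<^sup>2) - 2 * l * (LINT t:A|lborel. f t * g t)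
      + l\<^sup>2 * (LINT t:A|lborel. (g t)\<^sup>2)"
    using assms by (simp add: set_integral_add set_integral_diff)
  finally show "0 \<le> (LINT t:A|lborel. (f t)\<^sup>2) - 2 * l * (LINT t:A|lborel. f t * g t)
      + l\<^sup>2 * (LINT t:A|lborel. (g t)\<^sup>2)"
    using set_integral_nonneg[of A "\<lambda>t. (f t - l * g t)\<^sup>2"] by simp
qed (rule set_integral_nonneg, simp)

lemma set_integral_FTC_Icc:
  fixes F f :: "real \<Rightarrow> real"
  assumes "a \<le> b" "\<And>x. x \<in> {a..b} \<Longrightarrow> (F has_real_derivative f x) (at x)"
    and "continuous_on {a..b} f"
  shows "(LINT x:{a..b}|lborel. f x) = F b - F a"
  unfolding set_lebesgue_integral_def
proof (rule integral_FTC_atLeastAtMost[OF assms(1) _ assms(3)])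
  show "(F has_vector_derivative f x) (at x within {a..b})" if "a \<le> x" "x \<le> b" for x
    using assms(2)[of x] that
    by (simp add: has_real_derivative_iff_has_vector_derivative has_vector_derivative_at_within)
qed

lemma set_integral_exp_Icc:
  fixes \<beta> t :: real
  assumes "0 \<le> t"
  shows "\<beta> * (LINT s:{0..t}|lborel. exp (\<beta> * s)) = exp (\<beta> * t) - 1"
proof -
  have "(LINT s:{0..t}|lborel. \<beta> * exp (\<beta> * s)) = exp (\<beta> * t) - exp (\<beta> * 0)"
    by (rule set_integral_FTC_Icc[OF assms])
      (auto intro!: derivative_eq_intros continuous_intros)
  then show ?thesis by simp
qed

lemma set_integral_exp_sq_Icc:
  fixes \<beta> t :: real
  assumes "0 \<le> t" "\<beta> \<noteq> 0"
  shows "(LINT s:{0..t}|lborel. (exp (\<beta> * s))\<^sup>2) = (exp (2 * \<beta> * t) - 1) / (2 * \<beta>)"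
proof -
  have "(LINT s:{0..t}|lborel. (exp (\<beta> * s))\<^sup>2) = (LINT s:{0..t}|lborel. exp ((2 * \<beta>) * s))"
    by (rule set_lebesgue_integral_cong) (auto simp: power2_eq_square exp_add[symmetric])
  with set_integral_exp_Icc[OF assms(1), of "2 * \<beta>"] assms(2) show ?thesis
    by (simp add: field_simps)
qed

lemma borel_measurable_integral_Iic:
  fixes f :: "real \<Rightarrow> real"
  assumes [measurable]: "f \<in> borel_measurable lborel"
  shows "(\<lambda>t. LINT s|lborel. indicator {..t} s * f s) \<in> borel_measurable lborel"
proof -
  have "(\<lambda>(t::real, s). if s \<le> t then f s else 0) \<in> borel_measurable (lborel \<Otimes>\<^sub>M lborel)"
    by measurable
  then have [measurable]:
    "(\<lambda>(t, s). indicator {..t} s * f s) \<in> borel_measurable (lborel \<Otimes>\<^sub>M lborel)"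
    by (simp add: indicator_def case_prod_beta if_distrib cong: if_cong)
  show ?thesis by measurable
qed

lemma lborel_integral_swap_Iic:
  fixes g h :: "real \<Rightarrow> real"
  assumes g: "integrable lborel g" and h: "integrable lborel h"
  shows "(LINT t|lborel. h t * (LINT s|lborel. indicator {..t} s * g s))
       = (LINT s|lborel. g s * (LINT t|lborel. indicator {s..} t * h t))"
proof -
  have [measurable]: "g \<in> borel_measurable lborel" "h \<in> borel_measurable lborel"
    using g h by auto
  define F where "F = (\<lambda>t s. if s \<le> t then g s * h t else 0)"
  have F_t: "F t s = h t * (indicator {..t} s * g s)" for t s
    by (simp add: F_def indicator_def)
  have F_s: "F t s = g s * (indicator {s..} t * h t)" for t s
    by (simp add: F_def indicator_def)
  have [measurable]: "case_prod F \<in> borel_measurable (lborel \<Otimes>\<^sub>M lborel)"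
    unfolding F_def by measurable
  have "integrable (lborel \<Otimes>\<^sub>M lborel) (case_prod F)"
  proof (rule lborel_pair.Fubini_integrable)
    show "AE t in lborel. integrable lborel (\<lambda>s. case_prod F (t, s))"
      using integrable_mult_indicator[OF _ g] by (simp add: F_t)
    have bound: "(LINT s|lborel. norm (F t s)) \<le> (LINT s|lborel. \<bar>g s\<bar>) * \<bar>h t\<bar>" for t
    proof -
      have "(LINT s|lborel. norm (F t s)) = \<bar>h t\<bar> * (LINT s|lborel. indicator {..t} s * \<bar>g s\<bar>)"
        by (simp add: F_t abs_mult)
      also have "\<dots> \<le> \<bar>h t\<bar> * (LINT s|lborel. \<bar>g s\<bar>)"
        using integrable_mult_indicator[of "{..t}" lborel "\<lambda>s. \<bar>g s\<bar>"] g
        by (intro mult_left_mono integral_mono) (auto simp: indicator_def)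
      finally show ?thesis by (simp add: mult.commute)
    qed
    show "integrable lborel (\<lambda>t. LINT s|lborel. norm (case_prod F (t, s)))"
      by (rule Bochner_Integration.integrable_bound[of _ "\<lambda>t. (LINT s|lborel. \<bar>g s\<bar>) * \<bar>h t\<bar>"])
        (use h bound in \<open>auto intro!: AE_I2 order_trans[OF _ abs_ge_self] simp: integral_nonneg_AE\<close>)
  qed (measurable)
  note Fubini = lborel_pair.Fubini_integral[OF this]
  have "(LINT t|lborel. h t * (LINT s|lborel. indicator {..t} s * g s))
      = (LINT t|lborel. LINT s|lborel. F t s)"
    by (simp add: F_t)
  also have "\<dots> = (LINT s|lborel. LINT t|lborel. F t s)"
    using Fubini by simp
  also have "\<dots> = (LINT s|lborel. g s * (LINT t|lborel. indicator {s..} t * h t))"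
    by (simp add: F_s)
  finally show ?thesis .
qed

lemma integral_Ici_eq_diff_Iic:
  fixes h :: "real \<Rightarrow> real"
  assumes "integrable lborel h"
  shows "(LINT t|lborel. indicator {s..} t * h t)
       = (LINT t|lborel. h t) - (LINT t|lborel. indicator {..s} t * h t)"
proof -
  have "(LINT t|lborel. indicator {s..} t * h t) = (LINT t|lborel. h t - indicator {..s} t * h t)"
    by (rule integral_cong_AE)
      (use assms AE_lborel_singleton[of s] in \<open>auto elim!: eventually_mono simp: indicator_def\<close>)
  also have "\<dots> = (LINT t|lborel. h t) - (LINT t|lborel. indicator {..s} t * h t)"
    using assms integrable_mult_indicator[OF _ assms, of "{..s}"] by simp
  finally show ?thesis .
qed

lemma set_integral_Icc_parts:
  fixes g h :: "real \<Rightarrow> real"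
  assumes g: "set_integrable lborel {0..\<sigma>} g" and h: "set_integrable lborel {0..\<sigma>} h"
  shows "(LINT t:{0..\<sigma>}|lborel. h t * (LINT s:{0..t}|lborel. g s))
       + (LINT t:{0..\<sigma>}|lborel. (LINT s:{0..t}|lborel. h s) * g t)
       = (LINT s:{0..\<sigma>}|lborel. h s) * (LINT s:{0..\<sigma>}|lborel. g s)"
proof -
  define g' where "g' = (\<lambda>s. indicator {0..\<sigma>} s * g s)"
  define h' where "h' = (\<lambda>s. indicator {0..\<sigma>} s * h s)"
  have g': "integrable lborel g'" and h': "integrable lborel h'"
    using g h by (simp_all add: set_integrable_def g'_def h'_def)
  define G where "G t = (LINT s|lborel. indicator {..t} s * g' s)" for t
  define H where "H t = (LINT s|lborel. indicator {..t} s * h' s)" for t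
  have G_eq: "G t = (LINT s:{0..t}|lborel. g s)" and H_eq: "H t = (LINT s:{0..t}|lborel. h s)"
    if "t \<in> {0..\<sigma>}" for t
    unfolding G_def H_def g'_def h'_def set_lebesgue_integral_def
    by (use that in \<open>auto intro!: Bochner_Integration.integral_cong simp: indicator_def\<close>)
  have "\<bar>H t\<bar> \<le> (LINT s|lborel. \<bar>h' s\<bar>)" for t
  proof -
    have "\<bar>H t\<bar> \<le> (LINT s|lborel. \<bar>indicator {..t} s * h' s\<bar>)"
      unfolding H_def by (rule integral_abs_bound)
    also have "\<dots> \<le> (LINT s|lborel. \<bar>h' s\<bar>)"
      using integrable_mult_indicator[OF _ integrable_abs[OF h'], of "{..t}"] h'
      by (intro integral_mono) (auto simp: indicator_def abs_mult)
    finally show ?thesis .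
  qed
  then have Hg': "integrable lborel (\<lambda>s. H s * g' s)"
    unfolding H_def using h'
    by (intro integrable_mult_bounded[OF g'] borel_measurable_integral_Iic) auto
  have "(LINT t|lborel. h' t * G t) = (LINT s|lborel. g' s * ((LINT t|lborel. h' t) - H s))"
    unfolding G_def H_def
    by (simp add: lborel_integral_swap_Iic[OF g' h'] integral_Ici_eq_diff_Iic[OF h'])
  also have "\<dots> = (LINT t|lborel. h' t) * (LINT s|lborel. g' s) - (LINT s|lborel. H s * g' s)"
    using g' Hg' by (simp add: right_diff_distrib mult.commute)
  finally have parts: "(LINT t|lborel. h' t * G t) + (LINT s|lborel. H s * g' s)
      = (LINT t|lborel. h' t) * (LINT s|lborel. g' s)" by simp
  have "(LINT t:{0..\<sigma>}|lborel. h t * (LINT s:{0..t}|lborel. g s)) = (LINT t|lborel. h' t * G t)"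
    and "(LINT t:{0..\<sigma>}|lborel. (LINT s:{0..t}|lborel. h s) * g t) = (LINT s|lborel. H s * g' s)"
    unfolding set_lebesgue_integral_def[of lborel "{0..\<sigma>}"] g'_def h'_def
    by (auto intro!: Bochner_Integration.integral_cong simp: indicator_def G_eq H_eq)
  moreover have "(LINT s:{0..\<sigma>}|lborel. h s) = (LINT t|lborel. h' t)"
    and "(LINT s:{0..\<sigma>}|lborel. g s) = (LINT t|lborel. g' t)"
    unfolding set_lebesgue_integral_def g'_def h'_def by simp_all
  ultimately show ?thesis using parts by simp
qed

lemma isCont_at_0_le:
  fixes f :: "real \<Rightarrow> real"
  assumes "isCont f 0" and "\<And>\<epsilon>. 0 < \<epsilon> \<Longrightarrow> f \<epsilon> \<le> B"
  shows "f 0 \<le> B"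
proof (rule tendsto_upperbound)
  show "(f \<longlongrightarrow> f 0) (at_right 0)"
    using assms(1) by (simp add: isCont_def filterlim_at_split)
  show "eventually (\<lambda>\<epsilon>. f \<epsilon> \<le> B) (at_right 0)"
    using eventually_at_right_less by (rule eventually_mono) (rule assms(2))
qed simp

section \<open>Scalar controlled modes\<close>

lemma exp_weighted_solution:
  fixes y w :: "real \<Rightarrow> real"
  assumes y: "set_integrable lborel {0..\<sigma>} y" and w: "set_integrable lborel {0..\<sigma>} w"
    and eq: "\<And>t. t \<in> {0..\<sigma>} \<Longrightarrow> y t = (LINT s:{0..t}|lborel. - \<beta> * y s + w s)"
    and t: "t \<in> {0..\<sigma>}"
  shows "exp (\<beta> * t) * y t = (LINT s:{0..t}|lborel. exp (\<beta> * s) * w s)"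
proof -
  have sub: "{0..t} \<subseteq> {0..\<sigma>}" and t0: "0 \<le> t" using t by auto
  define g where "g s = - \<beta> * y s + w s" for s
  define h where "h s = \<beta> * exp (\<beta> * s)" for s
  have g_int: "set_integrable lborel {0..t} g"
    unfolding g_def using set_integrable_subset[OF y _ sub] set_integrable_subset[OF w _ sub]
    by auto
  have h_int: "set_integrable lborel {0..t} h"
    unfolding h_def by (rule borel_integrable_atLeastAtMost') (auto intro!: continuous_intros)
  have y_int: "set_integrable lborel {0..t} y"
    using set_integrable_subset[OF y _ sub] by simp
  have H: "(LINT s:{0..r}|lborel. h s) = exp (\<beta> * r) - 1" if "0 \<le> r" for r
    using set_integral_exp_Icc[OF that, of \<beta>] by (simp add: h_def)
  have G: "(LINT s:{0..r}|lborel. g s) = y r" if "r \<in> {0..t}" for r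
    using eq[of r] that sub by (auto simp: g_def)
  have "(LINT r:{0..t}|lborel. h r * (LINT s:{0..r}|lborel. g s))
      = (LINT r:{0..t}|lborel. h r * y r)"
    "(LINT r:{0..t}|lborel. (LINT s:{0..r}|lborel. h s) * g r)
      = (LINT r:{0..t}|lborel. (exp (\<beta> * r) - 1) * g r)"
    by (auto intro!: set_lebesgue_integral_cong simp: G H)
  with set_integral_Icc_parts[OF g_int h_int] H[OF t0] G[of t] t0
  have "(LINT r:{0..t}|lborel. h r * y r) + (LINT r:{0..t}|lborel. (exp (\<beta> * r) - 1) * g r)
      = (exp (\<beta> * t) - 1) * y t"
    by simp
  moreover have "(LINT r:{0..t}|lborel. h r * y r) + (LINT r:{0..t}|lborel. (exp (\<beta> * r) - 1) * g r)
      + (LINT r:{0..t}|lborel. g r) = (LINT s:{0..t}|lborel. exp (\<beta> * s) * w s)"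
  proof -
    have "set_integrable lborel {0..t} (\<lambda>r. h r * y r)"
      "set_integrable lborel {0..t} (\<lambda>r. (exp (\<beta> * r) - 1) * g r)"
      unfolding h_def by (auto intro!: set_integrable_continuous_mult y_int g_int continuous_intros)
    then have "(LINT r:{0..t}|lborel. h r * y r) + (LINT r:{0..t}|lborel. (exp (\<beta> * r) - 1) * g r)
        + (LINT r:{0..t}|lborel. g r)
        = (LINT r:{0..t}|lborel. h r * y r + (exp (\<beta> * r) - 1) * g r + g r)"
      using g_int by simp
    also have "\<dots> = (LINT s:{0..t}|lborel. exp (\<beta> * s) * w s)"
      by (rule set_lebesgue_integral_cong) (auto simp: h_def g_def algebra_simps)
    finally show ?thesis .
  qed
  ultimately show ?thesis
    using G[of t] t0 by (simp add: algebra_simps)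
qed

lemma solution_sq_le:
  fixes y w :: "real \<Rightarrow> real"
  assumes y: "set_integrable lborel {0..\<sigma>} y" and w: "set_integrable lborel {0..\<sigma>} w"
    and w2: "set_integrable lborel {0..\<sigma>} (\<lambda>t. (w t)\<^sup>2)"
    and eq: "\<And>t. t \<in> {0..\<sigma>} \<Longrightarrow> y t = (LINT s:{0..t}|lborel. - \<beta> * y s + w s)"
    and t: "t \<in> {0..\<sigma>}" and \<beta>: "\<beta> \<noteq> 0"
  shows "(y t)\<^sup>2 \<le> (1 - exp (- 2 * \<beta> * t)) / (2 * \<beta>) * (LINT s:{0..\<sigma>}|lborel. (w s)\<^sup>2)"
proof -
  have sub: "{0..t} \<subseteq> {0..\<sigma>}" and t0: "0 \<le> t" using t by auto
  define E where "E = (exp (2 * \<beta> * t) - 1) / (2 * \<beta>)"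
  have E: "(LINT s:{0..t}|lborel. (exp (\<beta> * s))\<^sup>2) = E"
    using set_integral_exp_sq_Icc[OF t0 \<beta>] by (simp add: E_def)
  then have "0 \<le> E"
    using set_integral_nonneg[of "{0..t}" "\<lambda>s. (exp (\<beta> * s))\<^sup>2"] by simp
  have "exp (2 * \<beta> * t) * (y t)\<^sup>2 = (exp (\<beta> * t) * y t)\<^sup>2"
    by (simp add: power_mult_distrib power2_eq_square flip: exp_add)
  also have "\<dots> = (LINT s:{0..t}|lborel. exp (\<beta> * s) * w s)\<^sup>2"
    using exp_weighted_solution[OF y w eq t] by simp
  also have "\<dots> \<le> E * (LINT s:{0..t}|lborel. (w s)\<^sup>2)"
    unfolding E[symmetric]
  proof (rule set_integral_Cauchy_Schwarz)
    show "set_integrable lborel {0..t} (\<lambda>s. (exp (\<beta> * s))\<^sup>2)"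
      by (rule borel_integrable_atLeastAtMost') (auto intro!: continuous_intros)
    show "set_integrable lborel {0..t} (\<lambda>s. (w s)\<^sup>2)"
      using set_integrable_subset[OF w2 _ sub] by simp
    show "set_integrable lborel {0..t} (\<lambda>s. exp (\<beta> * s) * w s)"
      using set_integrable_subset[OF w _ sub]
      by (auto intro!: set_integrable_continuous_mult continuous_intros)
  qed simp
  also have "\<dots> \<le> E * (LINT s:{0..\<sigma>}|lborel. (w s)\<^sup>2)"
    using \<open>0 \<le> E\<close> by (intro mult_left_mono set_integral_mono_set[OF w2 sub]) auto
  also have "E = exp (2 * \<beta> * t) * ((1 - exp (- 2 * \<beta> * t)) / (2 * \<beta>))"
    by (simp add: E_def right_diff_distrib flip: exp_add)
  finally show ?thesis
    by (simp only: mult.assoc mult_le_cancel_left_pos exp_gt_zero)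
qed

lemma solution_sq_eq_parts:
  fixes y g :: "real \<Rightarrow> real"
  assumes g: "set_integrable lborel {0..\<sigma>} g" and \<sigma>: "0 \<le> \<sigma>"
    and eq: "\<And>t. t \<in> {0..\<sigma>} \<Longrightarrow> y t = (LINT s:{0..t}|lborel. g s)"
  shows "2 * (LINT t:{0..\<sigma>}|lborel. y t * g t) = (y \<sigma>)\<^sup>2"
proof -
  have "(LINT t:{0..\<sigma>}|lborel. g t * (LINT s:{0..t}|lborel. g s))
      = (LINT t:{0..\<sigma>}|lborel. y t * g t)"
    "(LINT t:{0..\<sigma>}|lborel. (LINT s:{0..t}|lborel. g s) * g t) = (LINT t:{0..\<sigma>}|lborel. y t * g t)"
    by (auto intro!: set_lebesgue_integral_cong simp: eq)
  with set_integral_Icc_parts[OF g g] eq[of \<sigma>] \<sigma> show ?thesis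
    by (simp add: power2_eq_square)
qed

lemma set_integral_sq_split:
  fixes w \<phi> :: "real \<Rightarrow> real"
  assumes "set_integrable lborel A (\<lambda>t. (w t)\<^sup>2)" "set_integrable lborel A (\<lambda>t. \<phi> t * w t)"
    and "set_integrable lborel A (\<lambda>t. (\<phi> t)\<^sup>2)"
    and A: "A \<in> sets lborel"
    and E: "(LINT t:A|lborel. (\<phi> t)\<^sup>2) = E" "E \<noteq> 0" and P: "(LINT t:A|lborel. \<phi> t * w t) = P"
  shows "(LINT t:A|lborel. (w t)\<^sup>2) = (LINT t:A|lborel. (w t - P / E * \<phi> t)\<^sup>2) + P\<^sup>2 / E"
proof -
  have "(LINT t:A|lborel. (w t - P / E * \<phi> t)\<^sup>2)
      = (LINT t:A|lborel. (w t)\<^sup>2 - (2 * (P / E)) * (\<phi> t * w t) + (P / E)\<^sup>2 * (\<phi> t)\<^sup>2)"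
    by (rule set_lebesgue_integral_cong) (use A in \<open>auto simp: power2_eq_square algebra_simps\<close>)
  also have "\<dots> = (LINT t:A|lborel. (w t)\<^sup>2) - 2 * (P / E) * P + (P / E)\<^sup>2 * E"
    using assms by simp
  also have "\<dots> = (LINT t:A|lborel. (w t)\<^sup>2) - P\<^sup>2 / E"
    using E by (simp add: power2_eq_square field_simps)
  finally show ?thesis by simp
qed

definition steering_cost :: "real \<Rightarrow> real \<Rightarrow> real" where
  "steering_cost \<beta> \<sigma> = 2 * \<beta> / (1 - exp (-2 * \<beta> * \<sigma>))"

definition steering_control :: "real \<Rightarrow> real \<Rightarrow> real \<Rightarrow> real \<Rightarrow> real" where
  "steering_control \<beta> \<sigma> \<eta> t = \<beta> * \<eta> / sinh (\<beta> * \<sigma>) * exp (\<beta> * t)"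

definition sinh_ratio :: "real \<Rightarrow> real \<Rightarrow> real \<Rightarrow> real" where
  "sinh_ratio \<beta> \<sigma> t = sinh (\<beta> * t) / sinh (\<beta> * \<sigma>)"

lemma steering_control_trajectory:
  assumes "0 \<le> t"
  shows "(LINT s:{0..t}|lborel. - \<beta> * (sinh_ratio \<beta> \<sigma> s * \<eta>) + steering_control \<beta> \<sigma> \<eta> s)
       = sinh_ratio \<beta> \<sigma> t * \<eta>"
proof -
  have "(LINT s:{0..t}|lborel. - \<beta> * (sinh_ratio \<beta> \<sigma> s * \<eta>) + steering_control \<beta> \<sigma> \<eta> s)
      = sinh_ratio \<beta> \<sigma> t * \<eta> - sinh_ratio \<beta> \<sigma> 0 * \<eta>"
  proof (rule set_integral_FTC_Icc[OF assms])
    fix s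
    define c where "c = \<eta> / sinh (\<beta> * \<sigma>)"
    have "((\<lambda>s. c * sinh (\<beta> * s)) has_real_derivative c * (cosh (\<beta> * s) * \<beta>)) (at s)"
      by (auto intro!: derivative_eq_intros)
    moreover have "c * (cosh (\<beta> * s) * \<beta>)
        = - \<beta> * (sinh_ratio \<beta> \<sigma> s * \<eta>) + steering_control \<beta> \<sigma> \<eta> s"
      unfolding c_def sinh_ratio_def steering_control_def cosh_plus_sinh[symmetric, of "\<beta> * s"]
      by algebra
    moreover have "(\<lambda>s. c * sinh (\<beta> * s)) = (\<lambda>s. sinh_ratio \<beta> \<sigma> s * \<eta>)"
      by (auto simp: c_def sinh_ratio_def)
    ultimately show "((\<lambda>s. sinh_ratio \<beta> \<sigma> s * \<eta>) has_real_derivative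
        - \<beta> * (sinh_ratio \<beta> \<sigma> s * \<eta>) + steering_control \<beta> \<sigma> \<eta> s) (at s)"
      by simp
  qed (auto simp: sinh_ratio_def steering_control_def divide_inverse intro!: continuous_intros)
  then show ?thesis by (simp add: sinh_ratio_def)
qed

(* With phi t = exp (beta t), int_0^sigma phi^2 = (exp (2 beta sigma) - 1) / (2 beta), and every
   control reaching eta at time sigma has int_0^sigma phi w = exp (beta sigma) eta; these are the
   energy and the shape of the projection of such a control onto phi. *)
lemma steering_cost_eq:
  assumes "0 < \<beta>" "0 < \<sigma>"
  shows "(exp (\<beta> * \<sigma>) * \<eta>)\<^sup>2 / ((exp (2 * \<beta> * \<sigma>) - 1) / (2 * \<beta>)) = steering_cost \<beta> \<sigma> * \<eta>\<^sup>2"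
    and "exp (\<beta> * \<sigma>) * \<eta> / ((exp (2 * \<beta> * \<sigma>) - 1) / (2 * \<beta>)) * exp (\<beta> * t)
      = steering_control \<beta> \<sigma> \<eta> t"
proof -
  define p where "p = exp (\<beta> * \<sigma>)"
  have p: "1 < p" using assms by (simp add: p_def)
  have e2: "exp (2 * \<beta> * \<sigma>) = p\<^sup>2" and em2: "exp (-2 * \<beta> * \<sigma>) = 1 / p\<^sup>2"
    and sh: "sinh (\<beta> * \<sigma>) = (p - 1 / p) / 2"
    by (simp_all add: p_def sinh_field_def power2_eq_square exp_minus field_simps flip: exp_add)
  show "(exp (\<beta> * \<sigma>) * \<eta>)\<^sup>2 / ((exp (2 * \<beta> * \<sigma>) - 1) / (2 * \<beta>))
      = steering_cost \<beta> \<sigma> * \<eta>\<^sup>2"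
    and "exp (\<beta> * \<sigma>) * \<eta> / ((exp (2 * \<beta> * \<sigma>) - 1) / (2 * \<beta>)) * exp (\<beta> * t)
      = steering_control \<beta> \<sigma> \<eta> t"
    unfolding steering_cost_def steering_control_def e2 em2 sh p_def[symmetric]
    using p assms by (simp_all add: field_simps power2_eq_square)
qed

lemma steering_deviation_solution:
  fixes y w :: "real \<Rightarrow> real"
  assumes y: "set_integrable lborel {0..\<sigma>} y" and w: "set_integrable lborel {0..\<sigma>} w"
    and eq: "\<And>t. t \<in> {0..\<sigma>} \<Longrightarrow> y t = (LINT s:{0..t}|lborel. - \<beta> * y s + w s)"
    and t: "t \<in> {0..\<sigma>}" and \<beta>: "0 < \<beta>" and \<sigma>: "0 < \<sigma>"
  shows "y t - sinh_ratio \<beta> \<sigma> t * y \<sigma> = (LINT s:{0..t}|lborel.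
           - \<beta> * (y s - sinh_ratio \<beta> \<sigma> s * y \<sigma>) + (w s - steering_control \<beta> \<sigma> (y \<sigma>) s))"
proof -
  have sub: "{0..t} \<subseteq> {0..\<sigma>}" using t by auto
  have yw: "set_integrable lborel {0..t} (\<lambda>s. - \<beta> * y s + w s)"
    using set_integrable_subset[OF y _ sub] set_integrable_subset[OF w _ sub] by simp
  have opt: "set_integrable lborel {0..t}
      (\<lambda>s. - \<beta> * (sinh_ratio \<beta> \<sigma> s * y \<sigma>) + steering_control \<beta> \<sigma> (y \<sigma>) s)"
    using \<beta> \<sigma> by (intro borel_integrable_atLeastAtMost')
      (auto simp: sinh_ratio_def steering_control_def intro!: continuous_intros)
  have "(LINT s:{0..t}|lborel. - \<beta> * (y s - sinh_ratio \<beta> \<sigma> s * y \<sigma>)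
        + (w s - steering_control \<beta> \<sigma> (y \<sigma>) s))
      = (LINT s:{0..t}|lborel. (- \<beta> * y s + w s)
        - (- \<beta> * (sinh_ratio \<beta> \<sigma> s * y \<sigma>) + steering_control \<beta> \<sigma> (y \<sigma>) s))"
    by (rule set_lebesgue_integral_cong) (auto simp: algebra_simps)
  also have "\<dots> = y t - sinh_ratio \<beta> \<sigma> t * y \<sigma>"
    using set_integral_diff(2)[OF yw opt] eq[OF t] steering_control_trajectory[of t] t by simp
  finally show ?thesis ..
qed

lemma damped_mode_energy_eq:
  fixes y w :: "real \<Rightarrow> real"
  assumes \<beta>: "0 < \<beta>" and \<sigma>: "0 < \<sigma>"
    and y: "set_integrable lborel {0..\<sigma>} y" and w: "set_integrable lborel {0..\<sigma>} w"
    and w2: "set_integrable lborel {0..\<sigma>} (\<lambda>t. (w t)\<^sup>2)"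
    and eq: "\<And>t. t \<in> {0..\<sigma>} \<Longrightarrow> y t = (LINT s:{0..t}|lborel. - \<beta> * y s + w s)"
  shows "(LINT t:{0..\<sigma>}|lborel. (w t)\<^sup>2)
       = (LINT t:{0..\<sigma>}|lborel. (w t - steering_control \<beta> \<sigma> (y \<sigma>) t)\<^sup>2)
         + steering_cost \<beta> \<sigma> * (y \<sigma>)\<^sup>2"
proof -
  define E where "E = (exp (2 * \<beta> * \<sigma>) - 1) / (2 * \<beta>)"
  define P where "P = exp (\<beta> * \<sigma>) * y \<sigma>"
  have "(LINT t:{0..\<sigma>}|lborel. (w t)\<^sup>2)
      = (LINT t:{0..\<sigma>}|lborel. (w t - P / E * exp (\<beta> * t))\<^sup>2) + P\<^sup>2 / E"
  proof (rule set_integral_sq_split[OF w2])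
    show "set_integrable lborel {0..\<sigma>} (\<lambda>t. exp (\<beta> * t) * w t)"
      using w by (auto intro!: set_integrable_continuous_mult continuous_intros)
    show "set_integrable lborel {0..\<sigma>} (\<lambda>t. (exp (\<beta> * t))\<^sup>2)"
      by (rule borel_integrable_atLeastAtMost') (auto intro!: continuous_intros)
    show "(LINT t:{0..\<sigma>}|lborel. (exp (\<beta> * t))\<^sup>2) = E" "E \<noteq> 0"
      using set_integral_exp_sq_Icc[of \<sigma> \<beta>] \<beta> \<sigma> by (auto simp: E_def)
    show "(LINT t:{0..\<sigma>}|lborel. exp (\<beta> * t) * w t) = P"
      using exp_weighted_solution[OF y w eq, of \<sigma>] \<sigma> by (simp add: P_def)
  qed simp
  then show ?thesis
    using steering_cost_eq[OF \<beta> \<sigma>] by (simp add: P_def E_def)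
qed

lemma damped_mode_deviation_sq_le:
  fixes y w :: "real \<Rightarrow> real"
  assumes \<beta>: "0 < \<beta>" and \<sigma>: "0 < \<sigma>"
    and y: "set_integrable lborel {0..\<sigma>} y" and w: "set_integrable lborel {0..\<sigma>} w"
    and w2: "set_integrable lborel {0..\<sigma>} (\<lambda>t. (w t)\<^sup>2)"
    and eq: "\<And>t. t \<in> {0..\<sigma>} \<Longrightarrow> y t = (LINT s:{0..t}|lborel. - \<beta> * y s + w s)"
    and t: "t \<in> {0..\<sigma>}"
  shows "(y t - sinh_ratio \<beta> \<sigma> t * y \<sigma>)\<^sup>2
       \<le> (LINT s:{0..\<sigma>}|lborel. (w s - steering_control \<beta> \<sigma> (y \<sigma>) s)\<^sup>2) / (2 * \<beta>)"
proof -
  define u where "u s = y s - sinh_ratio \<beta> \<sigma> s * y \<sigma>" for s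
  define r where "r s = w s - steering_control \<beta> \<sigma> (y \<sigma>) s" for s
  have c1: "continuous_on {0..\<sigma>} (\<lambda>s. sinh_ratio \<beta> \<sigma> s * y \<sigma>)"
    and c2: "continuous_on {0..\<sigma>} (steering_control \<beta> \<sigma> (y \<sigma>))"
    using \<beta> \<sigma> by (auto simp: sinh_ratio_def steering_control_def intro!: continuous_intros)
  have u_int: "set_integrable lborel {0..\<sigma>} u"
    unfolding u_def by (rule set_integral_diff(1)[OF y borel_integrable_atLeastAtMost'[OF c1]])
  have r_int: "set_integrable lborel {0..\<sigma>} r"
    unfolding r_def by (rule set_integral_diff(1)[OF w borel_integrable_atLeastAtMost'[OF c2]])
  have "(\<lambda>s. (r s)\<^sup>2) = (\<lambda>s. (w s)\<^sup>2 - (2 * steering_control \<beta> \<sigma> (y \<sigma>) s) * w s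
      + (steering_control \<beta> \<sigma> (y \<sigma>) s)\<^sup>2)"
    by (auto simp: r_def power2_eq_square algebra_simps)
  moreover have "set_integrable lborel {0..\<sigma>} (\<lambda>s. (2 * steering_control \<beta> \<sigma> (y \<sigma>) s) * w s)"
    by (rule set_integrable_continuous_mult[OF w]) (intro continuous_intros c2)
  moreover have "set_integrable lborel {0..\<sigma>} (\<lambda>s. (steering_control \<beta> \<sigma> (y \<sigma>) s)\<^sup>2)"
    by (rule borel_integrable_atLeastAtMost') (intro continuous_intros c2)
  ultimately have r2_int: "set_integrable lborel {0..\<sigma>} (\<lambda>s. (r s)\<^sup>2)"
    using w2 by simp
  have "(u t)\<^sup>2 \<le> (1 - exp (- 2 * \<beta> * t)) / (2 * \<beta>) * (LINT s:{0..\<sigma>}|lborel. (r s)\<^sup>2)"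
    using solution_sq_le[OF u_int r_int r2_int _ t] steering_deviation_solution[OF y w eq _ \<beta> \<sigma>] \<beta>
    by (simp add: u_def r_def)
  also have "\<dots> \<le> 1 / (2 * \<beta>) * (LINT s:{0..\<sigma>}|lborel. (r s)\<^sup>2)"
    using \<beta> t by (intro mult_right_mono divide_right_mono) (auto intro: set_integral_nonneg)
  finally show ?thesis
    by (simp add: u_def r_def)
qed

lemma feedback_mode_energy_eq:
  fixes y w :: "real \<Rightarrow> real"
  assumes \<sigma>: "0 \<le> \<sigma>" and y: "continuous_on {0..\<sigma>} y" and w: "set_integrable lborel {0..\<sigma>} w"
    and w2: "set_integrable lborel {0..\<sigma>} (\<lambda>t. (w t)\<^sup>2)"
    and eq: "\<And>t. t \<in> {0..\<sigma>} \<Longrightarrow> y t = (LINT s:{0..t}|lborel. - (3 * \<alpha>) * y s + w s)"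
  shows "(LINT t:{0..\<sigma>}|lborel. (1/2) * (w t)\<^sup>2 - 4 * \<alpha>\<^sup>2 * (y t)\<^sup>2)
       = (1/2) * (LINT t:{0..\<sigma>}|lborel. (w t - 4 * \<alpha> * y t)\<^sup>2) + 2 * \<alpha> * (y \<sigma>)\<^sup>2"
proof -
  define g where "g s = - (3 * \<alpha>) * y s + w s" for s
  have y_int: "set_integrable lborel {0..\<sigma>} y"
    and y2_int: "set_integrable lborel {0..\<sigma>} (\<lambda>t. (y t)\<^sup>2)"
    by (auto intro!: borel_integrable_atLeastAtMost' continuous_intros y)
  have yw_int: "set_integrable lborel {0..\<sigma>} (\<lambda>t. y t * w t)"
    by (rule set_integrable_continuous_mult[OF w y])
  have g_int: "set_integrable lborel {0..\<sigma>} g"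
    unfolding g_def using y_int w by simp
  have yg_int: "set_integrable lborel {0..\<sigma>} (\<lambda>t. y t * g t)"
    by (rule set_integrable_continuous_mult[OF g_int y])
  have "(\<lambda>t. (w t - 4 * \<alpha> * y t)\<^sup>2) = (\<lambda>t. (w t)\<^sup>2 - (8 * \<alpha>) * (y t * w t) + (16 * \<alpha>\<^sup>2) * (y t)\<^sup>2)"
    by (auto simp: fun_eq_iff power2_eq_square algebra_simps)
  then have h2_int: "set_integrable lborel {0..\<sigma>} (\<lambda>t. (w t - 4 * \<alpha> * y t)\<^sup>2)"
    using w2 yw_int y2_int by simp
  (* g is the derivative of y, and y g integrates to y(sigma)^2 / 2 *)
  have "(LINT t:{0..\<sigma>}|lborel. (1/2) * (w t)\<^sup>2 - 4 * \<alpha>\<^sup>2 * (y t)\<^sup>2)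
      = (LINT t:{0..\<sigma>}|lborel. (1/2) * (w t - 4 * \<alpha> * y t)\<^sup>2 + (4 * \<alpha>) * (y t * g t))"
    by (rule set_lebesgue_integral_cong) (auto simp: g_def power2_eq_square algebra_simps)
  also have "\<dots> = (1/2) * (LINT t:{0..\<sigma>}|lborel. (w t - 4 * \<alpha> * y t)\<^sup>2)
      + 2 * \<alpha> * (2 * (LINT t:{0..\<sigma>}|lborel. y t * g t))"
    using h2_int yg_int by simp
  finally show ?thesis
    using solution_sq_eq_parts[OF g_int \<sigma>] eq by (simp add: g_def)
qed

lemma feedback_mode_sq_le:
  fixes y w :: "real \<Rightarrow> real"
  assumes \<alpha>: "0 < \<alpha>" and y: "continuous_on {0..\<sigma>} y" and w: "set_integrable lborel {0..\<sigma>} w"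
    and w2: "set_integrable lborel {0..\<sigma>} (\<lambda>t. (w t)\<^sup>2)"
    and eq: "\<And>t. t \<in> {0..\<sigma>} \<Longrightarrow> y t = (LINT s:{0..t}|lborel. - (3 * \<alpha>) * y s + w s)"
    and t: "t \<in> {0..\<sigma>}"
  shows "(y t)\<^sup>2 \<le> exp (2 * \<alpha> * \<sigma>) / (2 * \<alpha>) * (LINT s:{0..\<sigma>}|lborel. (w s - 4 * \<alpha> * y s)\<^sup>2)"
proof -
  define h where "h s = w s - 4 * \<alpha> * y s" for s
  have y_int: "set_integrable lborel {0..\<sigma>} y"
    and y2_int: "set_integrable lborel {0..\<sigma>} (\<lambda>t. (y t)\<^sup>2)"
    by (auto intro!: borel_integrable_atLeastAtMost' continuous_intros y)
  have h_int: "set_integrable lborel {0..\<sigma>} h"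
    unfolding h_def using y_int w by simp
  have "(\<lambda>t. (h t)\<^sup>2) = (\<lambda>t. (w t)\<^sup>2 - (8 * \<alpha>) * (y t * w t) + (16 * \<alpha>\<^sup>2) * (y t)\<^sup>2)"
    by (auto simp: h_def fun_eq_iff power2_eq_square algebra_simps)
  then have h2_int: "set_integrable lborel {0..\<sigma>} (\<lambda>t. (h t)\<^sup>2)"
    using w2 set_integrable_continuous_mult[OF w y] y2_int by simp
  have "y s = (LINT x:{0..s}|lborel. - (- \<alpha>) * y x + h x)" if "s \<in> {0..\<sigma>}" for s
    using eq[OF that] by (simp add: h_def algebra_simps)
  then have "(y t)\<^sup>2 \<le> (exp (2 * \<alpha> * t) - 1) / (2 * \<alpha>) * (LINT s:{0..\<sigma>}|lborel. (h s)\<^sup>2)"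
    using solution_sq_le[OF y_int h_int h2_int _ t, of "- \<alpha>"] \<alpha> by (simp add: field_simps)
  also have "\<dots> \<le> exp (2 * \<alpha> * \<sigma>) / (2 * \<alpha>) * (LINT s:{0..\<sigma>}|lborel. (h s)\<^sup>2)"
  proof -
    have "exp (2 * \<alpha> * t) \<le> exp (2 * \<alpha> * \<sigma>)" using \<alpha> t by simp
    then have "exp (2 * \<alpha> * t) - 1 \<le> exp (2 * \<alpha> * \<sigma>)" by linarith
    then show ?thesis
      by (rule mult_right_mono[OF divide_right_mono]) (use \<alpha> in \<open>auto intro: set_integral_nonneg\<close>)
  qed
  finally show ?thesis
    by (simp add: h_def)
qed

lemma steering_cost_pos:
  assumes "0 < \<beta>" "0 < \<sigma>"
  shows "0 < steering_cost \<beta> \<sigma>"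
  using assms by (simp add: steering_cost_def)

lemma steering_cost_strict_antimono:
  assumes "0 < \<beta>" "0 < \<sigma>\<^sub>1" "\<sigma>\<^sub>1 < \<sigma>\<^sub>2"
  shows "steering_cost \<beta> \<sigma>\<^sub>2 < steering_cost \<beta> \<sigma>\<^sub>1"
  unfolding steering_cost_def using assms by (intro divide_strict_left_mono) auto

lemma one_minus_exp_minus_div_strict_antimono:
  fixes x y :: real
  assumes "0 < x" "x < y"
  shows "(1 - exp (- y)) / y < (1 - exp (- x)) / x"
proof -
  have "\<exists>D. ((\<lambda>x. (1 - exp (- x)) / x) has_real_derivative D) (at z) \<and> D < 0"
    if "x \<le> z" "z \<le> y" for z
  proof (intro exI conjI)
    have z: "0 < z" using that assms by simp
    then show "((\<lambda>x. (1 - exp (- x)) / x) has_real_derivative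
        (exp (- z) * z - (1 - exp (- z))) / (z * z)) (at z)"
      by (auto intro!: derivative_eq_intros)
    have "1 + z < exp z"
    proof -
      have "0 < z\<^sup>2 / 2" using z by simp
      then show ?thesis using exp_lower_Taylor_quadratic[of z] z by linarith
    qed
    then have "exp (- z) * (1 + z) < 1"
      by (simp add: exp_minus field_simps)
    then show "(exp (- z) * z - (1 - exp (- z))) / (z * z) < 0"
      using z by (simp add: divide_neg_pos algebra_simps)
  qed
  from DERIV_neg_imp_decreasing[OF assms(2) this] show ?thesis by simp
qed

lemma steering_cost_strict_mono:
  assumes "0 < \<beta>\<^sub>1" "\<beta>\<^sub>1 < \<beta>\<^sub>2" "0 < \<sigma>"
  shows "steering_cost \<beta>\<^sub>1 \<sigma> < steering_cost \<beta>\<^sub>2 \<sigma>"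
proof -
  define x\<^sub>1 x\<^sub>2 where "x\<^sub>1 = 2 * \<beta>\<^sub>1 * \<sigma>" and "x\<^sub>2 = 2 * \<beta>\<^sub>2 * \<sigma>"
  have x: "0 < x\<^sub>1" "x\<^sub>1 < x\<^sub>2" using assms by (auto simp: x\<^sub>1_def x\<^sub>2_def)
  have "x\<^sub>1 / (1 - exp (- x\<^sub>1)) < x\<^sub>2 / (1 - exp (- x\<^sub>2))"
    using one_minus_exp_minus_div_strict_antimono[OF x] x by (simp add: field_simps)
  then have "x\<^sub>1 / (1 - exp (- x\<^sub>1)) / \<sigma> < x\<^sub>2 / (1 - exp (- x\<^sub>2)) / \<sigma>"
    using assms(3) by (rule divide_strict_right_mono)
  moreover have "steering_cost \<beta> \<sigma> = 2 * \<beta> * \<sigma> / (1 - exp (- (2 * \<beta> * \<sigma>))) / \<sigma>" for \<beta>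
    using assms by (simp add: steering_cost_def)
  ultimately show ?thesis by (simp add: x\<^sub>1_def x\<^sub>2_def)
qed

lemma sinh_ratio_bounds:
  assumes "0 < \<beta>" "0 \<le> t" "t \<le> \<sigma>"
  shows "0 \<le> sinh_ratio \<beta> \<sigma> t" "sinh_ratio \<beta> \<sigma> t \<le> 1"
    and "t < \<sigma> \<Longrightarrow> sinh_ratio \<beta> \<sigma> t < 1"
  using assms strict_mono_less_eq[OF sinh_real_strict_mono, of "\<beta> * t" "\<beta> * \<sigma>"]
    strict_mono_less[OF sinh_real_strict_mono, of "\<beta> * t" "\<beta> * \<sigma>"]
  by (auto simp: sinh_ratio_def divide_le_eq_1 divide_less_eq_1 zero_le_mult_iff)

section \<open>Orthonormal systems\<close>

locale orthonormal_system =
  fixes e :: "nat \<Rightarrow> 'h::real_inner"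
  assumes orthonormal: "\<forall>j\<ge>1. \<forall>k\<ge>1. inner (e j) (e k) = (if j = k then 1 else 0)"
begin

lemma norm_e: "1 \<le> k \<Longrightarrow> norm (e k) = 1"
  using orthonormal by (simp add: norm_eq_sqrt_inner)

lemma inner_sum_e:
  assumes "finite K" "K \<subseteq> {1..}" "j \<in> K"
  shows "inner (\<Sum>k\<in>K. u k *\<^sub>R e k) (e j) = u j"
proof -
  have "inner (\<Sum>k\<in>K. u k *\<^sub>R e k) (e j) = (\<Sum>k\<in>K. u k * inner (e k) (e j))"
    by (simp add: inner_sum_left)
  also have "\<dots> = (\<Sum>k\<in>K. if k = j then u k else 0)"
    by (rule sum.cong) (use assms orthonormal in \<open>auto simp: subset_eq\<close>)
  finally show ?thesis using assms by simp
qed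

lemma norm_sum_e_sq:
  assumes "finite K" "K \<subseteq> {1..}"
  shows "(norm (\<Sum>k\<in>K. u k *\<^sub>R e k))\<^sup>2 = (\<Sum>k\<in>K. (u k)\<^sup>2)"
proof -
  have "(norm (\<Sum>k\<in>K. u k *\<^sub>R e k))\<^sup>2 = (\<Sum>j\<in>K. u j * inner (\<Sum>k\<in>K. u k *\<^sub>R e k) (e j))"
    by (simp add: power2_norm_eq_inner inner_sum_right)
  also have "\<dots> = (\<Sum>j\<in>K. (u j)\<^sup>2)"
    using inner_sum_e[OF assms] by (simp add: power2_eq_square)
  finally show ?thesis .
qed

lemma norm_diff_projection_sq:
  assumes "finite K" "K \<subseteq> {1..}"
  shows "(norm (x - (\<Sum>k\<in>K. inner x (e k) *\<^sub>R e k)))\<^sup>2 = (norm x)\<^sup>2 - (\<Sum>k\<in>K. (inner x (e k))\<^sup>2)"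
proof -
  define p where "p = (\<Sum>k\<in>K. inner x (e k) *\<^sub>R e k)"
  have "inner x p = (\<Sum>k\<in>K. (inner x (e k))\<^sup>2)"
    unfolding p_def by (simp add: inner_sum_right power2_eq_square)
  moreover have "(norm p)\<^sup>2 = (\<Sum>k\<in>K. (inner x (e k))\<^sup>2)"
    unfolding p_def by (rule norm_sum_e_sq[OF assms])
  ultimately show ?thesis
    unfolding p_def[symmetric]
    by (simp add: power2_norm_eq_inner inner_diff_left inner_diff_right inner_commute)
qed

lemma Bessel_inequality:
  assumes "finite K" "K \<subseteq> {1..}"
  shows "(\<Sum>k\<in>K. (inner x (e k))\<^sup>2) \<le> (norm x)\<^sup>2"
  using norm_diff_projection_sq[OF assms, of x] by (metis diff_ge_0_iff_ge zero_le_power2)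

lemma Parseval_approx:
  assumes complete: "closure (span (e ` {1..})) = UNIV" and \<epsilon>: "0 < \<epsilon>"
    and J: "finite J" "J \<subseteq> {1..}"
  obtains K where "finite K" "K \<subseteq> {1..}" "J \<subseteq> K"
    "(norm x)\<^sup>2 - \<epsilon> \<le> (\<Sum>k\<in>K. (inner x (e k))\<^sup>2)"
proof -
  obtain s where "s \<in> span (e ` {1..})" and s: "dist x s < sqrt \<epsilon>"
    using closure_approachableD[of x "span (e ` {1..})" "sqrt \<epsilon>"] complete \<epsilon> by auto
  then obtain S r where S: "finite S" "S \<subseteq> e ` {1..}" and s_eq: "s = (\<Sum>v\<in>S. r v *\<^sub>R v)"
    unfolding span_explicit by blast
  obtain K0 where K0: "K0 \<subseteq> {1..}" "finite K0" "S = e ` K0"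
    using finite_subset_image[OF S] by blast
  define K where "K = K0 \<union> J"
  have K: "finite K" "K \<subseteq> {1..}" using K0 J by (auto simp: K_def)
  define p where "p = (\<Sum>k\<in>K. inner x (e k) *\<^sub>R e k)"
  have "p - s \<in> span (e ` K)"
    unfolding p_def s_eq K0(3) K_def by (intro span_diff span_sum span_scale span_base) auto
  moreover have "orthogonal (x - p) (e k)" if "k \<in> K" for k
    using inner_sum_e[OF K that] that by (simp add: orthogonal_def p_def inner_diff_left)
  ultimately have "orthogonal (x - p) (p - s)"
    by (auto intro: orthogonal_to_span)
  then have "(norm (x - s))\<^sup>2 = (norm (x - p))\<^sup>2 + (norm (p - s))\<^sup>2"
    using norm_add_Pythagorean[of "x - p" "p - s"] by (simp add: orthogonal_def)
  moreover have "(norm (x - s))\<^sup>2 < (sqrt \<epsilon>)\<^sup>2"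
    using s by (intro power_strict_mono) (auto simp: dist_norm)
  ultimately have "(norm (x - p))\<^sup>2 < \<epsilon>"
    using zero_le_power2[of "norm (p - s)"] real_sqrt_pow2[of \<epsilon>] \<epsilon> by linarith
  with norm_diff_projection_sq[OF K, of x] show thesis
    using K by (intro that[of K]) (auto simp: p_def K_def)
qed

end

section \<open>Modal decomposition of the cost\<close>

lemma
  fixes v :: "real \<Rightarrow> 'h::{real_inner, second_countable_topology}"
  assumes v: "L2_on T v" and c: "norm c \<le> 1" and \<sigma>: "\<sigma> \<le> T"
  shows L2_on_inner_sq_integrable: "set_integrable lborel {0..\<sigma>} (\<lambda>t. (inner (v t) c)\<^sup>2)"
    and L2_on_inner_integrable: "set_integrable lborel {0..\<sigma>} (\<lambda>t. inner (v t) c)"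
    and L2_on_norm_sq_integrable: "set_integrable lborel {0..\<sigma>} (\<lambda>t. (norm (v t))\<^sup>2)"
proof -
  have sub: "{0..\<sigma>} \<subseteq> {0..T}" using \<sigma> by auto
  have "(\<lambda>t. indicator {0..T} t *\<^sub>R v t) \<in> borel_measurable lborel"
    using v by (simp add: L2_on_def set_borel_measurable_def)
  then have "(\<lambda>t. inner (indicator {0..T} t *\<^sub>R v t) c) \<in> borel_measurable lborel"
    by (intro borel_measurable_inner) auto
  then have meas: "(\<lambda>t. indicator {0..T} t * inner (v t) c) \<in> borel_measurable lborel"
    by simp
  have v2: "set_integrable lborel {0..T} (\<lambda>t. (norm (v t))\<^sup>2)"
    using v by (simp add: L2_on_def)
  have "(inner (v t) c)\<^sup>2 \<le> (norm (v t))\<^sup>2" for t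
    using Cauchy_Schwarz_ineq2[of "v t" c] c
    by (intro power2_le_iff_abs_le[THEN iffD2]) (auto intro: order_trans[OF _ mult_left_le])
  moreover have "(\<lambda>t. indicator {0..T} t *\<^sub>R (inner (v t) c)\<^sup>2)
      = (\<lambda>t. (indicator {0..T} t * inner (v t) c)\<^sup>2)"
    by (auto simp: fun_eq_iff indicator_def)
  ultimately have sq: "set_integrable lborel {0..T} (\<lambda>t. (inner (v t) c)\<^sup>2)"
    using meas unfolding set_integrable_def
    by (intro Bochner_Integration.integrable_bound[OF v2[unfolded set_integrable_def]])
      (auto simp: indicator_def intro!: AE_I2)
  then have "set_integrable lborel {0..T} (\<lambda>t. inner (v t) c)"
    using meas by (rule set_integrable_Icc_of_sq[rotated])
  with sq v2 show "set_integrable lborel {0..\<sigma>} (\<lambda>t. (inner (v t) c)\<^sup>2)"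
    and "set_integrable lborel {0..\<sigma>} (\<lambda>t. inner (v t) c)"
    and "set_integrable lborel {0..\<sigma>} (\<lambda>t. (norm (v t))\<^sup>2)"
    by (auto intro: set_integrable_subset[OF _ _ sub])
qed

locale spectral_control = orthonormal_system e
  for e :: "nat \<Rightarrow> 'h::{real_inner, second_countable_topology}" +
  fixes a :: "nat \<Rightarrow> real" and T :: real
  assumes a1_pos: "0 < a 1" and a_strict_mono: "\<forall>k\<ge>1. a k < a (Suc k)"
begin

lemma a_mono:
  assumes "1 \<le> i" "i \<le> j"
  shows "a i \<le> a j"
  using assms(2)
proof (induction rule: dec_induct)
  case (step n)
  then have "a n < a (Suc n)" using a_strict_mono assms(1) by simp
  with step show ?case by simp
qed simp

lemma a_pos: "1 \<le> k \<Longrightarrow> 0 < a k"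
  using a_mono[of 1 k] a1_pos by simp

lemma inner_ctrl_e:
  "1 \<le> k \<Longrightarrow> inner (ctrl e a \<eta>) (e k) = (if k = 1 then 2 * a 1 * inner \<eta> (e 1) else 0)"
  using orthonormal by (auto simp: ctrl_def)

lemma norm_ctrl_sq: "(norm (ctrl e a \<eta>))\<^sup>2 = 4 * (a 1)\<^sup>2 * (inner \<eta> (e 1))\<^sup>2"
  using norm_e[of 1] by (simp add: ctrl_def power_mult_distrib)

definition admissible :: "(real \<Rightarrow> 'h) \<Rightarrow> (real \<Rightarrow> 'h) \<Rightarrow> bool" where
  "admissible y v \<longleftrightarrow> continuous_on {0..T} y \<and> y 0 = 0 \<and> v \<in> Cset e a T y"

definition cost :: "(real \<Rightarrow> 'h) \<Rightarrow> (real \<Rightarrow> 'h) \<Rightarrow> real \<Rightarrow> real" where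
  "cost y v \<sigma> = (LINT t:{0..\<sigma>}|lborel. (1/2) * (norm (v t))\<^sup>2 - (norm (ctrl e a (y t)))\<^sup>2)"

definition mode_density :: "(real \<Rightarrow> 'h) \<Rightarrow> (real \<Rightarrow> 'h) \<Rightarrow> nat \<Rightarrow> real \<Rightarrow> real" where
  "mode_density y v k t =
     (1/2) * (inner (v t) (e k))\<^sup>2 - (if k = 1 then (norm (ctrl e a (y t)))\<^sup>2 else 0)"

definition mode_cost :: "real \<Rightarrow> nat \<Rightarrow> real" where
  "mode_cost \<sigma> k = (if k = 1 then 4 * a 1 else steering_cost (a k) \<sigma>)"

(* The energy by which the k-th component of the control exceeds its cheapest choice: the
   feedback 4 a_1 y_1 for k = 1, the minimal-energy steering control for k >= 2. *)
definition mode_excess :: "(real \<Rightarrow> 'h) \<Rightarrow> (real \<Rightarrow> 'h) \<Rightarrow> real \<Rightarrow> nat \<Rightarrow> real" where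
  "mode_excess y v \<sigma> k = (1/2) * (LINT t:{0..\<sigma>}|lborel.
     (inner (v t) (e k) - (if k = 1 then 4 * a 1 * inner (y t) (e 1)
                           else steering_control (a k) \<sigma> (inner (y \<sigma>) (e k)) t))\<^sup>2)"

lemma mode_excess_nonneg: "0 \<le> mode_excess y v \<sigma> k"
  unfolding mode_excess_def by (simp add: set_integral_nonneg)

lemma admissible_mode_eq:
  assumes "admissible y v" "1 \<le> k" "t \<in> {0..T}"
  shows "inner (y t) (e k) = (LINT s:{0..t}|lborel.
           - (if k = 1 then 3 * a 1 else a k) * inner (y s) (e k) + inner (v s) (e k))"
proof -
  have "inner (y t) (e k) - inner (y 0) (e k) = (LINT s:{0..t}|lborel.
      - a k * inner (y s) (e k) - inner (ctrl e a (y s)) (e k) + inner (v s) (e k))"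
    using assms unfolding admissible_def Cset_def weak_sol_def by blast
  also have "\<dots> = (LINT s:{0..t}|lborel.
      - (if k = 1 then 3 * a 1 else a k) * inner (y s) (e k) + inner (v s) (e k))"
    by (rule set_lebesgue_integral_cong) (use assms(2) in \<open>auto simp: inner_ctrl_e\<close>)
  finally show ?thesis
    using assms(1) by (simp add: admissible_def)
qed

lemma admissible_mode_regularity:
  assumes "admissible y v" "\<sigma> \<le> T" "1 \<le> k"
  shows "continuous_on {0..\<sigma>} (\<lambda>t. inner (y t) (e k))"
    and "set_integrable lborel {0..\<sigma>} (\<lambda>t. inner (v t) (e k))"
    and "set_integrable lborel {0..\<sigma>} (\<lambda>t. (inner (v t) (e k))\<^sup>2)"
  using assms norm_e[OF assms(3)]
  by (auto simp: admissible_def Cset_def intro!: continuous_intros L2_on_inner_integrable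
      L2_on_inner_sq_integrable intro: continuous_on_subset)

lemma mode_energy_eq:
  assumes adm: "admissible y v" and \<sigma>: "0 < \<sigma>" "\<sigma> \<le> T" and k: "1 \<le> k"
  shows "(LINT t:{0..\<sigma>}|lborel. mode_density y v k t)
       = mode_excess y v \<sigma> k + (1/2) * mode_cost \<sigma> k * (inner (y \<sigma>) (e k))\<^sup>2"
proof -
  note reg = admissible_mode_regularity[OF adm \<sigma>(2) k]
  have eq: "inner (y t) (e k) = (LINT s:{0..t}|lborel.
      - (if k = 1 then 3 * a 1 else a k) * inner (y s) (e k) + inner (v s) (e k))"
    if "t \<in> {0..\<sigma>}" for t
    using admissible_mode_eq[OF adm k] that \<sigma> by simp
  show ?thesis
  proof (cases "k = 1")
    case True
    with feedback_mode_energy_eq[OF _ reg, of "a 1"] eq \<sigma> show ?thesis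
      by (simp add: mode_density_def mode_excess_def mode_cost_def norm_ctrl_sq)
  next
    case False
    with damped_mode_energy_eq[OF a_pos[OF k] \<sigma>(1)
        borel_integrable_atLeastAtMost'[OF reg(1)] reg(2,3)] eq \<sigma>
    show ?thesis
      by (simp add: mode_density_def mode_excess_def mode_cost_def)
  qed
qed

lemma first_mode_sq_le:
  assumes adm: "admissible y v" and \<sigma>: "\<sigma> \<le> T" and t: "t \<in> {0..\<sigma>}"
  shows "(inner (y t) (e 1))\<^sup>2 \<le> exp (2 * a 1 * \<sigma>) / a 1 * mode_excess y v \<sigma> 1"
  using feedback_mode_sq_le[OF a1_pos admissible_mode_regularity[OF adm \<sigma>, of 1] _ t]
    admissible_mode_eq[OF adm, of 1] \<sigma> a1_pos
  by (simp add: mode_excess_def)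

lemma mode_deviation_sq_le:
  assumes adm: "admissible y v" and \<sigma>: "0 < \<sigma>" "\<sigma> \<le> T" and k: "2 \<le> k" and t: "t \<in> {0..\<sigma>}"
  shows "(inner (y t) (e k) - sinh_ratio (a k) \<sigma> t * inner (y \<sigma>) (e k))\<^sup>2
       \<le> mode_excess y v \<sigma> k / a k"
proof -
  have k1: "1 \<le> k" and "k \<noteq> 1" using k by auto
  note reg = admissible_mode_regularity[OF adm \<sigma>(2) k1]
  show ?thesis
    using damped_mode_deviation_sq_le[OF a_pos[OF k1] \<sigma>(1)
        borel_integrable_atLeastAtMost'[OF reg(1)] reg(2,3) _ t]
      admissible_mode_eq[OF adm k1] \<sigma> \<open>k \<noteq> 1\<close>
    by (simp add: mode_excess_def)
qed

lemma sum_mode_density_le: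
  assumes "finite K" "K \<subseteq> {1..}" "1 \<in> K"
  shows "(\<Sum>k\<in>K. mode_density y v k t) \<le> (1/2) * (norm (v t))\<^sup>2 - (norm (ctrl e a (y t)))\<^sup>2"
proof -
  have "(\<Sum>k\<in>K. mode_density y v k t)
      = (1/2) * (\<Sum>k\<in>K. (inner (v t) (e k))\<^sup>2) - (norm (ctrl e a (y t)))\<^sup>2"
    using assms by (simp add: mode_density_def sum_subtractf sum_distrib_left)
  then show ?thesis
    using Bessel_inequality[OF assms(1,2), of "v t"] by simp
qed

lemma sum_mode_energy_le_cost:
  assumes adm: "admissible y v" and \<sigma>: "0 < \<sigma>" "\<sigma> \<le> T"
    and K: "finite K" "K \<subseteq> {1..}" "1 \<in> K"
  shows "(\<Sum>k\<in>K. mode_excess y v \<sigma> k + (1/2) * mode_cost \<sigma> k * (inner (y \<sigma>) (e k))\<^sup>2)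
       \<le> cost y v \<sigma>"
proof -
  have ctrl_int: "set_integrable lborel {0..\<sigma>} (\<lambda>t. (norm (ctrl e a (y t)))\<^sup>2)"
    using admissible_mode_regularity(1)[OF adm \<sigma>(2), of 1]
    by (auto simp: norm_ctrl_sq intro!: borel_integrable_atLeastAtMost' continuous_intros)
  have density_int: "set_integrable lborel {0..\<sigma>} (mode_density y v k)" if "k \<in> K" for k
    using admissible_mode_regularity(3)[OF adm \<sigma>(2), of k] that K ctrl_int
    by (cases "k = 1") (auto simp: mode_density_def[abs_def])
  have "(\<Sum>k\<in>K. mode_excess y v \<sigma> k + (1/2) * mode_cost \<sigma> k * (inner (y \<sigma>) (e k))\<^sup>2)
      = (\<Sum>k\<in>K. LINT t:{0..\<sigma>}|lborel. mode_density y v k t)"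
    using mode_energy_eq[OF adm \<sigma>] K by (auto intro!: sum.cong)
  also have "\<dots> = (LINT t:{0..\<sigma>}|lborel. (\<Sum>k\<in>K. mode_density y v k t))"
    by (rule set_integral_sum[symmetric]) (rule density_int)
  also have "\<dots> \<le> cost y v \<sigma>"
    unfolding cost_def
  proof (rule set_integral_mono)
    show "set_integrable lborel {0..\<sigma>} (\<lambda>t. \<Sum>k\<in>K. mode_density y v k t)"
      by (rule set_integrable_sum) (rule density_int)
    show "set_integrable lborel {0..\<sigma>} (\<lambda>t. (1/2) * (norm (v t))\<^sup>2 - (norm (ctrl e a (y t)))\<^sup>2)"
      using adm L2_on_norm_sq_integrable[OF _ _ \<sigma>(2), of v 0] ctrl_int
      by (simp add: admissible_def Cset_def)
  qed (rule sum_mode_density_le[OF K])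
  finally show ?thesis .
qed

lemma Ifun_eq_INF_cost: "Ifun e a T y \<sigma> = (INF v \<in> Cset e a T y. ereal (cost y v \<sigma>))"
  by (simp add: Ifun_def cost_def)

lemma cost_ge_norm_sq:
  assumes complete: "closure (span (e ` {1..})) = UNIV"
    and adm: "admissible y v" and \<sigma>: "0 < \<sigma>" "\<sigma> \<le> T"
    and m: "0 \<le> m" "\<And>k. 1 \<le> k \<Longrightarrow> m \<le> mode_cost \<sigma> k"
  shows "(1/2) * m * (norm (y \<sigma>))\<^sup>2 \<le> cost y v \<sigma>"
proof -
  have "(1/2) * m * ((norm (y \<sigma>))\<^sup>2 - \<epsilon>) \<le> cost y v \<sigma>" if \<epsilon>: "0 < \<epsilon>" for \<epsilon>
  proof -
    obtain K where K: "finite K" "K \<subseteq> {1..}" "{1} \<subseteq> K"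
      and "(norm (y \<sigma>))\<^sup>2 - \<epsilon> \<le> (\<Sum>k\<in>K. (inner (y \<sigma>) (e k))\<^sup>2)"
      using Parseval_approx[OF complete \<epsilon>, of "{1}"] by auto
    then have "(1/2) * m * ((norm (y \<sigma>))\<^sup>2 - \<epsilon>) \<le> (1/2) * m * (\<Sum>k\<in>K. (inner (y \<sigma>) (e k))\<^sup>2)"
      using m(1) by (intro mult_left_mono) auto
    also have "\<dots> = (\<Sum>k\<in>K. (1/2) * m * (inner (y \<sigma>) (e k))\<^sup>2)"
      by (rule sum_distrib_left)
    also have "\<dots> \<le> (\<Sum>k\<in>K. mode_excess y v \<sigma> k + (1/2) * mode_cost \<sigma> k * (inner (y \<sigma>) (e k))\<^sup>2)"
      using K(2) m(2) mode_excess_nonneg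
      by (intro sum_mono add_increasing) (auto intro!: mult_right_mono)
    also have "\<dots> \<le> cost y v \<sigma>"
      using sum_mode_energy_le_cost[OF adm \<sigma> K(1,2)] K(3) by simp
    finally show ?thesis .
  qed
  then show ?thesis
    using isCont_at_0_le[of "\<lambda>\<epsilon>. (1/2) * m * ((norm (y \<sigma>))\<^sup>2 - \<epsilon>)"] by simp
qed

lemma second_mode_abs_le:
  assumes "admissible y v" "0 < T" "t \<in> {0..T}"
  shows "\<bar>inner (y t) (e 2)\<bar>
       \<le> sinh_ratio (a 2) T t * \<bar>inner (y T) (e 2)\<bar> + sqrt (mode_excess y v T 2 / a 2)"
proof -
  have "\<bar>inner (y t) (e 2) - sinh_ratio (a 2) T t * inner (y T) (e 2)\<bar>
      \<le> sqrt (mode_excess y v T 2 / a 2)"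
    using real_sqrt_le_mono[OF mode_deviation_sq_le[OF assms(1,2) order_refl _ assms(3)]] by simp
  moreover have "\<bar>sinh_ratio (a 2) T t * inner (y T) (e 2)\<bar>
      = sinh_ratio (a 2) T t * \<bar>inner (y T) (e 2)\<bar>"
    using sinh_ratio_bounds(1)[of "a 2" t T] a_pos[of 2] assms(3) by (simp add: abs_mult)
  ultimately show ?thesis
    using abs_triangle_ineq[of "inner (y t) (e 2) - sinh_ratio (a 2) T t * inner (y T) (e 2)"
        "sinh_ratio (a 2) T t * inner (y T) (e 2)"] by simp
qed

lemma higher_mode_sq_le:
  assumes "admissible y v" "0 < T" "t \<in> {0..T}" "2 \<le> k"
  shows "(inner (y t) (e k))\<^sup>2 \<le> 2 * (inner (y T) (e k))\<^sup>2 + 2 * (mode_excess y v T k / a 2)"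
proof -
  define r z where "r = sinh_ratio (a k) T t" and "z = inner (y T) (e k)"
  have "\<bar>r\<bar> \<le> 1"
    using sinh_ratio_bounds[of "a k" t T] a_pos[of k] assms(3,4) by (simp add: r_def)
  then have "(r * z)\<^sup>2 \<le> z\<^sup>2"
    by (simp add: power_mult_distrib mult_left_le_one_le abs_square_le_1)
  moreover have "mode_excess y v T k / a k \<le> mode_excess y v T k / a 2"
    using a_pos[of 2] a_pos[of k] assms(4)
    by (intro divide_left_mono[OF a_mono mode_excess_nonneg]) auto
  then have "(inner (y t) (e k) - r * z)\<^sup>2 \<le> mode_excess y v T k / a 2"
    using mode_deviation_sq_le[OF assms(1,2) order_refl assms(4,3)] by (simp add: r_def z_def)
  moreover have "(inner (y t) (e k))\<^sup>2 \<le> 2 * (r * z)\<^sup>2 + 2 * (inner (y t) (e k) - r * z)\<^sup>2"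
    using zero_le_power2[of "inner (y t) (e k) - 2 * (r * z)"]
    by (simp add: power2_eq_square algebra_simps)
  ultimately show ?thesis by (simp add: z_def)
qed

lemma modes_sq_sum_le:
  assumes adm: "admissible y v" and T: "0 < T" and t: "t \<in> {0..T}"
    and K: "finite K" "K \<subseteq> {1..}" "1 \<in> K" "2 \<in> K"
  defines "S \<equiv> \<Sum>k\<in>K. mode_excess y v T k"
  shows "(\<Sum>k\<in>K. (inner (y t) (e k))\<^sup>2)
       \<le> (sinh_ratio (a 2) T t * \<bar>inner (y T) (e 2)\<bar> + sqrt (S / a 2))\<^sup>2
         + (exp (2 * a 1 * T) / a 1 + 2 / a 2) * S + 2 * (\<Sum>k\<in>K-{1,2}. (inner (y T) (e k))\<^sup>2)"
proof -
  have R_le: "mode_excess y v T k \<le> S" if "k \<in> K" for k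
    unfolding S_def using K(1) that mode_excess_nonneg by (intro member_le_sum) auto
  have "(inner (y t) (e 1))\<^sup>2 \<le> exp (2 * a 1 * T) / a 1 * S"
    using first_mode_sq_le[OF adm order_refl t] R_le[OF K(3)] a1_pos
    by (meson order_trans mult_left_mono divide_nonneg_pos exp_ge_zero less_imp_le)
  moreover have "\<bar>inner (y t) (e 2)\<bar> \<le> sinh_ratio (a 2) T t * \<bar>inner (y T) (e 2)\<bar> + sqrt (S / a 2)"
  proof -
    have "sqrt (mode_excess y v T 2 / a 2) \<le> sqrt (S / a 2)"
      using R_le[OF K(4)] a_pos[of 2] by (simp add: divide_right_mono)
    then show ?thesis using second_mode_abs_le[OF adm T t] by linarith
  qed
  then have "(inner (y t) (e 2))\<^sup>2 \<le> (sinh_ratio (a 2) T t * \<bar>inner (y T) (e 2)\<bar> + sqrt (S / a 2))\<^sup>2"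
    using power_mono[of _ _ 2] by fastforce
  moreover have "(\<Sum>k\<in>K-{1,2}. (inner (y t) (e k))\<^sup>2)
      \<le> 2 * (\<Sum>k\<in>K-{1,2}. (inner (y T) (e k))\<^sup>2) + 2 / a 2 * S"
  proof -
    have "(\<Sum>k\<in>K-{1,2}. (inner (y t) (e k))\<^sup>2)
        \<le> (\<Sum>k\<in>K-{1,2}. 2 * (inner (y T) (e k))\<^sup>2 + 2 / a 2 * mode_excess y v T k)"
      using K(2) higher_mode_sq_le[OF adm T t] by (intro sum_mono) force
    also have "\<dots> \<le> 2 * (\<Sum>k\<in>K-{1,2}. (inner (y T) (e k))\<^sup>2) + 2 / a 2 * S"
      unfolding sum.distrib sum_distrib_left[symmetric] S_def using a_pos[of 2] mode_excess_nonneg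
      by (intro add_left_mono mult_left_mono sum_mono2 K(1)) auto
    finally show ?thesis .
  qed
  moreover have "(\<Sum>k\<in>K. (inner (y t) (e k))\<^sup>2)
      = (inner (y t) (e 1))\<^sup>2 + (inner (y t) (e 2))\<^sup>2 + (\<Sum>k\<in>K-{1,2}. (inner (y t) (e k))\<^sup>2)"
    using K sum.remove[of K 1 "\<lambda>k. (inner (y t) (e k))\<^sup>2"]
      sum.remove[of "K - {1}" 2 "\<lambda>k. (inner (y t) (e k))\<^sup>2"]
    by (simp add: Diff_insert2[symmetric])
  ultimately show ?thesis
    unfolding distrib_right by linarith
qed

end

section \<open>The exit problem\<close>

locale exit_problem = spectral_control e a T
  for e :: "nat \<Rightarrow> 'h::{real_inner, second_countable_topology}" and a T +
  fixes L :: real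
  assumes complete: "closure (span (e ` {1..})) = UNIV"
    and T_pos: "0 < T" and L_pos: "0 < L"
    and exit_cost_gap: "steering_cost (a 2) T < 4 * a 1"
begin

definition minimizer :: "(real \<Rightarrow> 'h) \<Rightarrow> real \<Rightarrow> bool" where
  "minimizer y \<tau> \<longleftrightarrow> (y, \<tau>) \<in> Tset T L \<and> (\<forall>(y', \<sigma>) \<in> Tset T L. Ifun e a T y \<tau> \<le> Ifun e a T y' \<sigma>)"

definition exit_cost :: real where
  "exit_cost = (1/2) * steering_cost (a 2) T * L\<^sup>2"

definition exit_path :: "real \<Rightarrow> 'h" where
  "exit_path t = (sinh_ratio (a 2) T t * L) *\<^sub>R e 2"

definition exit_control :: "real \<Rightarrow> 'h" where
  "exit_control t = steering_control (a 2) T L t *\<^sub>R e 2"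

lemma a2_pos: "0 < a 2"
  using a_pos[of 2] by simp

lemma sinh_ratio_T: "sinh_ratio (a 2) T T = 1"
  using a2_pos T_pos by (simp add: sinh_ratio_def)

lemma
  assumes "1 \<le> k"
  shows inner_exit_path:
      "inner (exit_path t) (e k) = (if k = 2 then sinh_ratio (a 2) T t * L else 0)"
    and inner_exit_control:
      "inner (exit_control t) (e k) = (if k = 2 then steering_control (a 2) T L t else 0)"
  using assms orthonormal by (auto simp: exit_path_def exit_control_def)

lemma exit_path_in_Tset: "(exit_path, T) \<in> Tset T L"
proof -
  have "norm (exit_path t) \<le> L" if "t \<in> {0..<T}" for t
    using sinh_ratio_bounds[OF a2_pos, of t T] that norm_e[of 2] L_pos
    by (simp add: exit_path_def mult_left_le_one_le)
  then show ?thesis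
    using T_pos L_pos a2_pos norm_e[of 2] sinh_ratio_T
    by (auto simp: Tset_def exit_path_def sinh_ratio_def intro!: continuous_intros)
qed

lemma exit_control_admissible: "admissible exit_path exit_control"
proof -
  have cont: "continuous_on {0..T} exit_control"
    using a2_pos T_pos
    by (auto simp: exit_control_def steering_control_def intro!: continuous_intros)
  have "L2_on T exit_control"
    using cont unfolding L2_on_def set_borel_measurable_def
    by (auto intro!: borel_integrable_atLeastAtMost' continuous_intros
        borel_measurable_continuous_on_indicator)
  moreover have "weak_sol e a T exit_path exit_control"
    unfolding weak_sol_def
  proof (intro allI impI ballI)
    fix k :: nat and t assume "1 \<le> k" "t \<in> {0..T}"
    moreover have "ctrl e a (exit_path s) = 0" for s
      using inner_exit_path[of 1 s] by (simp add: ctrl_def)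
    ultimately show "inner (exit_path t) (e k) - inner (exit_path 0) (e k) = (LINT s:{0..t}|lborel.
        - a k * inner (exit_path s) (e k) - inner (ctrl e a (exit_path s)) (e k)
        + inner (exit_control s) (e k))"
      using steering_control_trajectory[of t "a 2" T L]
      by (simp add: inner_exit_path inner_exit_control sinh_ratio_def cong: if_cong)
  qed
  ultimately show ?thesis
    using a2_pos T_pos
    by (auto simp: admissible_def Cset_def exit_path_def sinh_ratio_def intro!: continuous_intros)
qed

lemma cost_exit_control: "cost exit_path exit_control T = exit_cost"
proof -
  have ctrl0: "ctrl e a (exit_path t) = 0" for t
    using inner_exit_path[of 1 t] by (simp add: ctrl_def)
  (* exit_control is the minimal-energy control of its own trajectory: no excess energy *)
  have "(LINT t:{0..T}|lborel. (steering_control (a 2) T L t)\<^sup>2)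
      = (LINT t:{0..T}|lborel. (steering_control (a 2) T L t - steering_control (a 2) T L t)\<^sup>2)
        + steering_cost (a 2) T * L\<^sup>2"
    using damped_mode_energy_eq[OF a2_pos T_pos, of "\<lambda>t. sinh_ratio (a 2) T t * L"
        "steering_control (a 2) T L"] steering_control_trajectory[of _ "a 2" T L]
      a2_pos T_pos sinh_ratio_T
    by (force simp: sinh_ratio_def steering_control_def intro!: borel_integrable_atLeastAtMost'
        continuous_intros)
  then show ?thesis
    using norm_e[of 2] by (simp add: cost_def exit_cost_def exit_control_def ctrl0)
qed

lemma minimizer_Ifun_le: "minimizer y \<tau> \<Longrightarrow> Ifun e a T y \<tau> \<le> exit_cost"
proof -
  assume "minimizer y \<tau>"
  then have "Ifun e a T y \<tau> \<le> Ifun e a T exit_path T"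
    using exit_path_in_Tset by (auto simp: minimizer_def)
  also have "\<dots> \<le> cost exit_path exit_control T"
    unfolding Ifun_eq_INF_cost using exit_control_admissible
    by (auto simp: admissible_def intro: INF_lower2)
  finally show ?thesis by (simp add: cost_exit_control)
qed

lemma minimizer_admissible:
  "minimizer y \<tau> \<Longrightarrow> v \<in> Cset e a T y \<Longrightarrow> admissible y v"
  by (simp add: minimizer_def Tset_def admissible_def)

lemma minimizer_exit_time:
  assumes "minimizer y \<tau>"
  shows "\<tau> = T"
proof (rule ccontr)
  assume "\<tau> \<noteq> T"
  moreover have \<tau>: "0 < \<tau>" "\<tau> \<le> T" and norm_y: "norm (y \<tau>) = L"
    using assms by (auto simp: minimizer_def Tset_def)
  ultimately have "\<tau> < T" by simp
  define m where "m = min (4 * a 1) (steering_cost (a 2) \<tau>)"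
  have "steering_cost (a 2) T < m"
    using exit_cost_gap steering_cost_strict_antimono[OF a2_pos \<tau>(1) \<open>\<tau> < T\<close>] by (simp add: m_def)
  have "m \<le> mode_cost \<tau> k" if "1 \<le> k" for k
  proof (cases "k = 1")
    case False
    then have "a 2 \<le> a k" using a_mono[of 2 k] that by simp
    then have "steering_cost (a 2) \<tau> \<le> steering_cost (a k) \<tau>"
      using steering_cost_strict_mono[OF a2_pos _ \<tau>(1), of "a k"] by (cases "a 2 = a k") auto
    then show ?thesis using False by (simp add: m_def mode_cost_def)
  qed (simp add: m_def mode_cost_def)
  then have "ereal ((1/2) * m * L\<^sup>2) \<le> Ifun e a T y \<tau>"
    unfolding Ifun_eq_INF_cost
    using cost_ge_norm_sq[OF complete minimizer_admissible[OF assms] \<tau>] norm_y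
      \<open>steering_cost (a 2) T < m\<close> steering_cost_pos[OF a2_pos T_pos]
    by (auto intro!: INF_greatest)
  also have "\<dots> \<le> exit_cost"
    by (rule minimizer_Ifun_le[OF assms])
  finally show False
    using \<open>steering_cost (a 2) T < m\<close> L_pos by (simp add: exit_cost_def)
qed

definition mode_gap :: real where
  "mode_gap = min (4 * a 1) (steering_cost (a 3) T) - steering_cost (a 2) T"

lemma mode_gap_pos: "0 < mode_gap"
proof -
  have "a 2 < a 3"
    using a_strict_mono[rule_format, of 2] by (simp add: eval_nat_numeral)
  then show ?thesis
    using exit_cost_gap steering_cost_strict_mono[OF a2_pos _ T_pos, of "a 3"]
    by (simp add: mode_gap_def)
qed

lemma mode_cost_ge_gap:
  assumes "1 \<le> k" "k \<noteq> 2"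
  shows "steering_cost (a 2) T + mode_gap \<le> mode_cost T k"
proof (cases "k = 1")
  case False
  with assms have "a 3 \<le> a k" using a_mono[of 3 k] by simp
  then have "steering_cost (a 3) T \<le> steering_cost (a k) T"
    using steering_cost_strict_mono[OF _ _ T_pos, of "a 3" "a k"] a_pos[of 3]
    by (cases "a 3 = a k") auto
  with False show ?thesis by (simp add: mode_gap_def mode_cost_def)
qed (simp add: mode_gap_def mode_cost_def)

lemma sum_excess_le_cost:
  assumes adm: "admissible y v" and K: "finite K" "K \<subseteq> {1..}" "1 \<in> K" "2 \<in> K"
  shows "(\<Sum>k\<in>K. mode_excess y v T k)
       + (1/2) * steering_cost (a 2) T * (\<Sum>k\<in>K. (inner (y T) (e k))\<^sup>2)
       + (1/2) * mode_gap * (\<Sum>k\<in>K-{2}. (inner (y T) (e k))\<^sup>2) \<le> cost y v T"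
proof -
  define z where "z k = (inner (y T) (e k))\<^sup>2" for k
  have "(\<Sum>k\<in>K-{2}. z k) = (\<Sum>k\<in>K. if k = 2 then 0 else z k)"
    using K by (simp add: sum.If_cases Diff_eq)
  then have "(\<Sum>k\<in>K. mode_excess y v T k) + (1/2) * steering_cost (a 2) T * (\<Sum>k\<in>K. z k)
      + (1/2) * mode_gap * (\<Sum>k\<in>K-{2}. z k)
      = (\<Sum>k\<in>K. mode_excess y v T k + (1/2) * steering_cost (a 2) T * z k
          + (1/2) * mode_gap * (if k = 2 then 0 else z k))"
    by (simp add: sum.distrib sum_distrib_left)
  also have "\<dots> \<le> (\<Sum>k\<in>K. mode_excess y v T k + (1/2) * mode_cost T k * z k)"
  proof (intro sum_mono)
    fix k assume "k \<in> K"
    then show "mode_excess y v T k + (1/2) * steering_cost (a 2) T * z k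
        + (1/2) * mode_gap * (if k = 2 then 0 else z k)
        \<le> mode_excess y v T k + (1/2) * mode_cost T k * z k"
      using K(2) mode_cost_ge_gap[of k] mult_right_mono[of _ _ "z k"]
      by (force simp: z_def mode_cost_def algebra_simps)
  qed
  also have "\<dots> \<le> cost y v T"
    unfolding z_def by (rule sum_mode_energy_le_cost[OF adm T_pos order_refl K(1-3)])
  finally show ?thesis unfolding z_def .
qed

lemma minimizer_near_optimal:
  assumes "minimizer y T" "0 < \<epsilon>"
  obtains v where "admissible y v" "cost y v T < exit_cost + \<epsilon>"
proof -
  have "Ifun e a T y T < ereal (exit_cost + \<epsilon>)"
    using minimizer_Ifun_le[OF assms(1)] assms(2) by (simp add: le_less_trans)
  then obtain v where "v \<in> Cset e a T y" "cost y v T < exit_cost + \<epsilon>"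
    unfolding Ifun_eq_INF_cost by (auto simp: INF_less_iff)
  with minimizer_admissible[OF assms(1)] that show thesis by blast
qed

lemma excess_le_of_near_optimal:
  assumes adm: "admissible y v" and near: "cost y v T < exit_cost + \<epsilon>"
    and K: "finite K" "K \<subseteq> {1..}" "1 \<in> K" "2 \<in> K"
    and Parseval: "L\<^sup>2 - \<epsilon> \<le> (\<Sum>k\<in>K. (inner (y T) (e k))\<^sup>2)"
  shows "(\<Sum>k\<in>K. mode_excess y v T k) + (1/2) * mode_gap * (\<Sum>k\<in>K-{2}. (inner (y T) (e k))\<^sup>2)
       \<le> (1 + steering_cost (a 2) T / 2) * \<epsilon>"
proof -
  have "(1/2) * steering_cost (a 2) T * (L\<^sup>2 - \<epsilon>)
      \<le> (1/2) * steering_cost (a 2) T * (\<Sum>k\<in>K. (inner (y T) (e k))\<^sup>2)"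
    using Parseval steering_cost_pos[OF a2_pos T_pos] by (intro mult_left_mono) auto
  then show ?thesis
    using sum_excess_le_cost[OF adm K] near by (simp add: exit_cost_def algebra_simps)
qed

lemma minimizer_norm_T: "minimizer y T \<Longrightarrow> norm (y T) = L"
  by (simp add: minimizer_def Tset_def)

lemma minimizer_exit_direction:
  assumes min: "minimizer y T" and k: "1 \<le> k" "k \<noteq> 2"
  shows "inner (y T) (e k) = 0"
proof -
  have "(1/2) * mode_gap * (inner (y T) (e k))\<^sup>2 - (1 + steering_cost (a 2) T / 2) * \<epsilon> \<le> 0"
    if \<epsilon>: "0 < \<epsilon>" for \<epsilon>
  proof -
    obtain v where v: "admissible y v" "cost y v T < exit_cost + \<epsilon>"
      using minimizer_near_optimal[OF min \<epsilon>] .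
    obtain K where K: "finite K" "K \<subseteq> {1..}" "{1, 2, k} \<subseteq> K"
      and Parseval: "L\<^sup>2 - \<epsilon> \<le> (\<Sum>j\<in>K. (inner (y T) (e j))\<^sup>2)"
      using Parseval_approx[OF complete \<epsilon>, of "{1, 2, k}" "y T"] k minimizer_norm_T[OF min] by auto
    have "(inner (y T) (e k))\<^sup>2 \<le> (\<Sum>j\<in>K-{2}. (inner (y T) (e j))\<^sup>2)"
      using K k by (intro member_le_sum) auto
    then have "(1/2) * mode_gap * (inner (y T) (e k))\<^sup>2
        \<le> (1/2) * mode_gap * (\<Sum>j\<in>K-{2}. (inner (y T) (e j))\<^sup>2)"
      using mode_gap_pos by (intro mult_left_mono) auto
    moreover have "0 \<le> (\<Sum>j\<in>K. mode_excess y v T j)"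
      by (intro sum_nonneg mode_excess_nonneg)
    ultimately show ?thesis
      using excess_le_of_near_optimal[OF v K(1,2) _ _ Parseval] K(3) by auto
  qed
  then have "(1/2) * mode_gap * (inner (y T) (e k))\<^sup>2 \<le> 0"
    using isCont_at_0_le[of "\<lambda>\<epsilon>. (1/2) * mode_gap * (inner (y T) (e k))\<^sup>2
        - (1 + steering_cost (a 2) T / 2) * \<epsilon>" 0] by simp
  then show ?thesis
    using mode_gap_pos by (simp add: mult_le_0_iff)
qed

lemma norm_sq_le_of_near_optimal:
  assumes adm: "admissible y v" and near: "cost y v T < exit_cost + \<epsilon>" and \<epsilon>: "0 < \<epsilon>"
    and norm_T: "norm (y T) = L" and t: "t \<in> {0..T}"
  defines "\<delta> \<equiv> (1 + steering_cost (a 2) T / 2) * \<epsilon>"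
  shows "(norm (y t))\<^sup>2 \<le> \<epsilon> + (sinh_ratio (a 2) T t * L + sqrt (\<delta> / a 2))\<^sup>2
           + (exp (2 * a 1 * T) / a 1 + 2 / a 2 + 4 / mode_gap) * \<delta>"
proof -
  obtain K1 where K1: "finite K1" "K1 \<subseteq> {1..}" "{1, 2} \<subseteq> K1"
    and Parseval_T: "L\<^sup>2 - \<epsilon> \<le> (\<Sum>k\<in>K1. (inner (y T) (e k))\<^sup>2)"
    using Parseval_approx[OF complete \<epsilon>, of "{1, 2}" "y T"] norm_T by auto
  obtain K where K: "finite K" "K \<subseteq> {1..}" "K1 \<subseteq> K"
    and Parseval_t: "(norm (y t))\<^sup>2 - \<epsilon> \<le> (\<Sum>k\<in>K. (inner (y t) (e k))\<^sup>2)"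
    using Parseval_approx[OF complete \<epsilon> K1(1,2), of "y t"] by auto
  have K12: "1 \<in> K" "2 \<in> K" using K1(3) K(3) by auto
  define S where "S = (\<Sum>k\<in>K. mode_excess y v T k)"
  define Z where "Z = (\<Sum>k\<in>K-{2}. (inner (y T) (e k))\<^sup>2)"
  have "(\<Sum>k\<in>K1. (inner (y T) (e k))\<^sup>2) \<le> (\<Sum>k\<in>K. (inner (y T) (e k))\<^sup>2)"
    by (rule sum_mono2[OF K(1,3)]) simp
  then have "S + (1/2) * mode_gap * Z \<le> \<delta>"
    using excess_le_of_near_optimal[OF adm near K(1,2) K12] Parseval_T
    by (simp add: S_def Z_def \<delta>_def)
  moreover have "0 \<le> S" "0 \<le> Z"
    by (auto simp: S_def Z_def intro!: sum_nonneg mode_excess_nonneg)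
  moreover have "0 \<le> (1/2) * mode_gap * Z" using mode_gap_pos \<open>0 \<le> Z\<close> by simp
  ultimately have S: "0 \<le> S" "S \<le> \<delta>" and "(1/2) * mode_gap * Z \<le> \<delta>"
    by linarith+
  then have Z: "Z \<le> 2 / mode_gap * \<delta>"
    using mode_gap_pos by (simp add: field_simps)
  have "(\<Sum>k\<in>K-{1,2}. (inner (y T) (e k))\<^sup>2) \<le> Z"
    unfolding Z_def by (rule sum_mono2) (use K in auto)
  moreover have "\<bar>inner (y T) (e 2)\<bar> \<le> L"
    using Cauchy_Schwarz_ineq2[of "y T" "e 2"] norm_T norm_e[of 2] by simp
  then have "(sinh_ratio (a 2) T t * \<bar>inner (y T) (e 2)\<bar> + sqrt (S / a 2))\<^sup>2
      \<le> (sinh_ratio (a 2) T t * L + sqrt (\<delta> / a 2))\<^sup>2"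
    using sinh_ratio_bounds(1)[OF a2_pos, of t T] t S a2_pos
    by (intro power_mono add_mono mult_left_mono real_sqrt_le_mono divide_right_mono) auto
  moreover have "(exp (2 * a 1 * T) / a 1 + 2 / a 2) * S \<le> (exp (2 * a 1 * T) / a 1 + 2 / a 2) * \<delta>"
    using S a1_pos a2_pos by (intro mult_left_mono) auto
  ultimately show ?thesis
    using Parseval_t modes_sq_sum_le[OF adm T_pos t K(1,2) K12] Z
    by (simp add: S_def distrib_right)
qed

lemma minimizer_interior:
  assumes min: "minimizer y T" and t: "t \<in> {0..<T}"
  shows "norm (y t) < L"
proof (rule ccontr)
  assume "\<not> norm (y t) < L"
  moreover have "norm (y t) \<le> L"
    using min t by (auto simp: minimizer_def Tset_def)
  ultimately have norm_t: "norm (y t) = L" by simp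
  define \<rho> where "\<rho> = sinh_ratio (a 2) T t"
  have \<rho>: "0 \<le> \<rho>" "\<rho> < 1"
    using sinh_ratio_bounds[OF a2_pos, of t T] t by (auto simp: \<rho>_def)
  define c where "c = 1 + steering_cost (a 2) T / 2"
  define C where "C = exp (2 * a 1 * T) / a 1 + 2 / a 2 + 4 / mode_gap"
  define \<Phi> where "\<Phi> \<epsilon> = L\<^sup>2 - (\<epsilon> + (\<rho> * L + sqrt (c * \<epsilon> / a 2))\<^sup>2 + C * (c * \<epsilon>))" for \<epsilon>
  have "\<Phi> \<epsilon> \<le> 0" if \<epsilon>: "0 < \<epsilon>" for \<epsilon>
  proof -
    obtain v where v: "admissible y v" "cost y v T < exit_cost + \<epsilon>"
      using minimizer_near_optimal[OF min \<epsilon>] .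
    have "t \<in> {0..T}" using t by simp
    from norm_sq_le_of_near_optimal[OF v \<epsilon> minimizer_norm_T[OF min] this] norm_t
    show ?thesis by (simp add: \<Phi>_def \<rho>_def c_def C_def)
  qed
  moreover have "isCont \<Phi> 0"
    unfolding \<Phi>_def using a2_pos by (intro continuous_intros) auto
  ultimately have "L\<^sup>2 \<le> (\<rho> * L)\<^sup>2"
    using isCont_at_0_le[of \<Phi> 0] by (simp add: \<Phi>_def)
  moreover have "(\<rho> * L)\<^sup>2 < L\<^sup>2"
    using \<rho> L_pos
    by (intro power_strict_mono) (auto simp: mult_left_le_one_le mult_less_cancel_right1)
  ultimately show False by simp
qed

end

lemma Tstar_less_imp_steering_cost_less:
  assumes \<beta>: "0 < \<beta>" and T: "Tstar \<alpha> \<beta> < ereal T"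
  shows "steering_cost \<beta> T < 4 * \<alpha>"
proof -
  have "\<beta> < 2 * \<alpha>"
    using T by (auto simp: Tstar_def split: if_splits)
  define x where "x = \<beta> / (2 * \<alpha>)"
  have x: "0 < x" "x < 1"
    using \<beta> \<open>\<beta> < 2 * \<alpha>\<close> by (auto simp: x_def field_simps)
  have "- (1 / (2 * \<beta>)) * ln (1 - x) < T"
    using T \<open>\<beta> < 2 * \<alpha>\<close> by (simp add: Tstar_def x_def)
  then have "- 2 * \<beta> * T < ln (1 - x)"
    using \<beta> by (simp add: field_simps)
  then have "exp (- 2 * \<beta> * T) < exp (ln (1 - x))"
    by simp
  then have "exp (- 2 * \<beta> * T) < 1 - x"
    using x by simp
  moreover have "ln (1 - x) < 0"
    using x by simp
  then have "0 < \<beta> * T"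
    using \<open>- 2 * \<beta> * T < ln (1 - x)\<close> by linarith
  then have "0 < T"
    using \<beta> by (simp add: zero_less_mult_iff)
  ultimately show ?thesis
    using \<beta> \<open>\<beta> < 2 * \<alpha>\<close> by (simp add: steering_cost_def x_def field_simps)
qed

theorem lemma3p13:
  fixes e :: "nat \<Rightarrow> 'h::{real_inner, complete_space, second_countable_topology}"
    and a :: "nat \<Rightarrow> real" and T L \<tau> :: real and ystar :: "real \<Rightarrow> 'h"
  assumes orthonormal: "\<forall>j\<ge>1. \<forall>k\<ge>1. inner (e j) (e k) = (if j = k then 1 else 0)"
    and complete: "closure (span (e ` {1..})) = UNIV"
    and nonneg: "\<forall>k\<ge>1. 0 \<le> a k"
    and strict_incr: "\<forall>k\<ge>1. a k < a (Suc k)"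
    and a2_le: "a 2 \<le> 2 * a 1"
    and L_pos: "L > 0"
    and T_gt: "ereal T > Tstar (a 1) (a 2)"
    and minimizer: "(ystar, \<tau>) \<in> Tset T L"
        "\<forall>(y, \<sigma>) \<in> Tset T L. Ifun e a T ystar \<tau> \<le> Ifun e a T y \<sigma>"
  shows "(\<forall>t\<in>{0..<T}. norm (ystar t) < L) \<and> norm (ystar T) = L \<and> \<tau> = T \<and>
         (\<forall>k\<ge>1. k \<noteq> 2 \<longrightarrow> inner (ystar T) (e k) = 0)"
proof -
  have T_pos: "0 < T"
    using minimizer(1) by (auto simp: Tset_def)
  have "0 \<le> a 1" "a 1 < a 2"
    using nonneg strict_incr[rule_format, of 1] by (simp_all add: numeral_2_eq_2)
  then have a2_pos: "0 < a 2" by linarith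
  have gap: "steering_cost (a 2) T < 4 * a 1"
    by (rule Tstar_less_imp_steering_cost_less[OF a2_pos T_gt])
  interpret exit_problem e a T L
    using orthonormal strict_incr complete T_pos L_pos gap steering_cost_pos[OF a2_pos T_pos]
    by unfold_locales auto
  have "minimizer ystar \<tau>"
    using minimizer by (simp add: minimizer_def)
  moreover from this have "\<tau> = T"
    by (rule minimizer_exit_time)
  ultimately have min: "minimizer ystar T" by simp
  show ?thesis
    using minimizer_interior[OF min] minimizer_norm_T[OF min] \<open>\<tau> = T\<close>
      minimizer_exit_direction[OF min] by blast
qed

end
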